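(* There exists an absolute constant $c_2>0$ such that for every $k\ge1$ and $p\in[0,1]$: if $f_p(n,2n)<c_2$ for some $n\ge1$, then there is $c>0$ such that for every $m\ge1$, $\mathbf P_p\big[0\overset{\mathbb S_k}{\longleftrightarrow}\partial\overline{B_m}\big]\le e^{-cm}$.
   Context: $\mathbb S_k=\mathbb Z^2\times\{0,\dots,k\}$ with nearest-neighbour edges; $\mathbf P_p$ Bernoulli bond percolation. For $T\subset\mathbb Z^2$, $\overline T=T\times\{0,\dots,k\}$; $B_m=[-m,m]^2$; $\partial U$ is the set of vertices of $U$ with a neighbour outside $U$. $f_p(m,n)$ is the probability of an open path inside $\overline{[0,m]\times[0,n]}$ from $\overline{\{0\}\times[0,n]}$ to $\overline{\{m\}\times[0,n]}$. $0\overset{\mathbb S_k}{\longleftrightarrow}\partial\overline{B_m}$ is the event of an open path from the origin to $\partial\overline{B_m}$. *)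

theory Defs
  imports Complex_Main
begin

type_synonym vtx = "int \<times> int \<times> int"

definition in_slab :: "nat \<Rightarrow> vtx \<Rightarrow> bool" where
  "in_slab k v = (case v of (x, y, z) \<Rightarrow> 0 \<le> z \<and> z \<le> int k)"

definition adj :: "nat \<Rightarrow> vtx \<Rightarrow> vtx \<Rightarrow> bool" where
  "adj k u v = (in_slab k u \<and> in_slab k v \<and>
     (case u of (x1, y1, z1) \<Rightarrow> case v of (x2, y2, z2) \<Rightarrow>
        \<bar>x1 - x2\<bar> + \<bar>y1 - y2\<bar> + \<bar>z1 - z2\<bar> = 1))"

definition slab_edges :: "nat \<Rightarrow> vtx set \<Rightarrow> vtx set set" where
  "slab_edges k U = {{u, v} | u v. u \<in> U \<and> v \<in> U \<and> adj k u v}"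

definition bar :: "nat \<Rightarrow> (int \<times> int) set \<Rightarrow> vtx set" where
  "bar k T = {(x, y, z). (x, y) \<in> T \<and> 0 \<le> z \<and> z \<le> int k}"

definition box :: "int \<Rightarrow> (int \<times> int) set" where
  "box m = {-m..m} \<times> {-m..m}"

definition vboundary :: "nat \<Rightarrow> vtx set \<Rightarrow> vtx set" where
  "vboundary k U = {u \<in> U. \<exists>v. adj k u v \<and> v \<notin> U}"

definition open_path :: "vtx set set \<Rightarrow> vtx list \<Rightarrow> bool" where
  "open_path \<omega> xs = (xs \<noteq> [] \<and> (\<forall>i. Suc i < length xs \<longrightarrow> {xs ! i, xs ! Suc i} \<in> \<omega>))"

definition connects :: "vtx set set \<Rightarrow> vtx set \<Rightarrow> vtx set \<Rightarrow> bool" where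
  "connects \<omega> A B = (\<exists>xs. open_path \<omega> xs \<and> hd xs \<in> A \<and> last xs \<in> B)"

text \<open>Bernoulli bond percolation probability of an event depending only on the
  states of the (finitely many) edges in E: \<omega> is the set of open edges in E.\<close>
definition perc_prob :: "real \<Rightarrow> vtx set set \<Rightarrow> (vtx set set \<Rightarrow> bool) \<Rightarrow> real" where
  "perc_prob p E A = (\<Sum>\<omega> \<in> {\<omega>. \<omega> \<subseteq> E \<and> A \<omega>}. p ^ card \<omega> * (1 - p) ^ card (E - \<omega>))"

text \<open>f_p(m,n): open crossing inside [0,m]x[0,n]-bar from its left to its right side.\<close>
definition f_cross :: "nat \<Rightarrow> real \<Rightarrow> int \<Rightarrow> int \<Rightarrow> real" where
  "f_cross k p m n = perc_prob p (slab_edges k (bar k ({0..m} \<times> {0..n})))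
     (\<lambda>\<omega>. connects \<omega> (bar k ({0} \<times> {0..n})) (bar k ({m} \<times> {0..n})))"

text \<open>P_p[0 <-> boundary of B_m-bar]. Any open path from the origin to the boundary
  first hits the boundary after using only edges of B_m-bar, so the event is determined
  by those edges.\<close>
definition conn_prob :: "nat \<Rightarrow> real \<Rightarrow> int \<Rightarrow> real" where
  "conn_prob k p m = perc_prob p (slab_edges k (bar k (box m)))
     (\<lambda>\<omega>. connects \<omega> {(0, 0, 0)} (vboundary k (bar k (box m))))"

end

theory Submission
  imports Defs
begin

text \<open>
  Write \<open>f(N)\<close> for \<open>f\<^sub>p(N, 2N)\<close>. A left-right crossing of the \<open>3N \<times> 6N\<close> box crosses both
  vertical strips \<open>[0, N]\<close> and \<open>[2N, 3N]\<close>. Cutting a strip into \<open>N \<times> N\<close> squares, a crossing of it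
  contains an easy-way crossing of one of the 5 stacked \<open>N \<times> 2N\<close> rectangles or a transversal
  crossing of one of the 6 squares, each of probability at most \<open>f(N)\<close>. The two strips use disjoint
  edges, so \<open>f(3N) \<le> 144 f(N)\<^sup>2\<close>, and if \<open>144 f(n) \<le> 1/2\<close> then \<open>144 f(3\<^sup>j n) \<le> (1/2)^(2^j)\<close>.

  The same strip argument bounds the probability \<open>\<theta>\<^sub>z(M)\<close> that \<open>(0, 0, z)\<close> reaches \<open>\<partial>B\<^sub>M\<close> by
  \<open>16 f(M)\<close>. By the Simon-Lieb inequality, obtained by decomposing an open path according to the
  cluster of its starting point in \<open>B\<^sub>M\<close> and its last exit from that cluster,
  \<open>\<Theta>(M + L) \<le> |\<partial>B\<^sub>M| \<Theta>(M) \<Theta>(L)\<close> for \<open>\<Theta> = \<Sigma>\<^sub>z \<theta>\<^sub>z\<close>. Since \<open>|\<partial>B\<^sub>M|\<close> is polynomial in \<open>M\<close>,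
  some \<open>M = 3\<^sup>j n\<close> has \<open>|\<partial>B\<^sub>M| \<Theta>(M) \<le> 1/2\<close>, and iterating in steps of \<open>M\<close> gives exponential decay.
  Thus \<open>c\<^sub>2 = 1/288\<close> works.
\<close>

section \<open>Bernoulli percolation on a finite edge set\<close>

definition config_weight :: "real \<Rightarrow> vtx set set \<Rightarrow> vtx set set \<Rightarrow> real" where
  "config_weight p E \<omega> = p ^ card \<omega> * (1 - p) ^ card (E - \<omega>)"

lemma perc_prob_eq_sum_Pow:
  assumes "finite E"
  shows "perc_prob p E A = (\<Sum>\<omega>\<in>Pow E. if A \<omega> then config_weight p E \<omega> else 0)"
proof -
  have "{\<omega>. \<omega> \<subseteq> E \<and> A \<omega>} = {\<omega>\<in>Pow E. A \<omega>}" by auto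
  then show ?thesis unfolding perc_prob_def config_weight_def
    by (simp add: sum.inter_filter[symmetric] assms)
qed

lemma config_weight_nonneg: "0 \<le> p \<Longrightarrow> p \<le> 1 \<Longrightarrow> 0 \<le> config_weight p E \<omega>"
  unfolding config_weight_def by simp

lemma sum_config_weight:
  assumes "finite S"
  shows "(\<Sum>\<omega>\<in>Pow S. config_weight p S \<omega>) = 1"
  using assms
proof (induction S rule: finite_induct)
  case empty
  then show ?case by (simp add: config_weight_def)
next
  case (insert a S)
  have fin: "finite (Pow S)" using insert by simp
  have disj: "Pow S \<inter> insert a ` Pow S = {}" using insert by auto
  have inj: "inj_on (insert a) (Pow S)"
    using insert(2) by (intro inj_onI) (metis PowD in_mono insert_ident)
  have closed: "(\<Sum>\<omega>\<in>Pow S. config_weight p (insert a S) \<omega>) = (1 - p) * (\<Sum>\<omega>\<in>Pow S. config_weight p S \<omega>)"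
    unfolding sum_distrib_left
  proof (rule sum.cong)
    fix \<omega> assume "\<omega> \<in> Pow S"
    then have "insert a S - \<omega> = insert a (S - \<omega>)" "a \<notin> S - \<omega>" using insert by auto
    then have "card (insert a S - \<omega>) = Suc (card (S - \<omega>))" using insert by simp
    then show "config_weight p (insert a S) \<omega> = (1 - p) * config_weight p S \<omega>"
      unfolding config_weight_def by simp
  qed simp
  have open_a: "(\<Sum>\<omega>\<in>insert a ` Pow S. config_weight p (insert a S) \<omega>) = p * (\<Sum>\<omega>\<in>Pow S. config_weight p S \<omega>)"
    unfolding sum.reindex[OF inj] sum_distrib_left
  proof (rule sum.cong)
    fix \<omega> assume "\<omega> \<in> Pow S"
    then have "insert a S - insert a \<omega> = S - \<omega>" "a \<notin> \<omega>" "finite \<omega>" using insert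
      by (auto intro: finite_subset)
    then show "(config_weight p (insert a S) \<circ> insert a) \<omega> = p * config_weight p S \<omega>"
      unfolding config_weight_def by simp
  qed simp
  have "(\<Sum>\<omega>\<in>Pow (insert a S). config_weight p (insert a S) \<omega>)
      = (\<Sum>\<omega>\<in>Pow S. config_weight p (insert a S) \<omega>) + (\<Sum>\<omega>\<in>insert a ` Pow S. config_weight p (insert a S) \<omega>)"
    unfolding Pow_insert using sum.union_disjoint[OF fin _ disj] fin by simp
  also have "\<dots> = 1" using closed open_a insert.IH by simp
  finally show ?case .
qed

lemma bij_betw_Un_Pow:
  assumes "E1 \<inter> E2 = {}"
  shows "bij_betw (\<lambda>(a, b). a \<union> b) (Pow E1 \<times> Pow E2) (Pow (E1 \<union> E2))"
proof (rule bij_betw_byWitness[where f' = "\<lambda>\<omega>. (\<omega> \<inter> E1, \<omega> \<inter> E2)"])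
  show "\<forall>x\<in>Pow E1 \<times> Pow E2. (\<lambda>\<omega>. (\<omega> \<inter> E1, \<omega> \<inter> E2)) ((\<lambda>(a, b). a \<union> b) x) = x"
    using assms by auto
qed auto

lemma config_weight_Un:
  assumes "finite E1" "finite E2" "E1 \<inter> E2 = {}" "a \<subseteq> E1" "b \<subseteq> E2"
  shows "config_weight p (E1 \<union> E2) (a \<union> b) = config_weight p E1 a * config_weight p E2 b"
proof -
  have "finite a" "finite b" using assms by (auto intro: finite_subset)
  then have "card (a \<union> b) = card a + card b"
    using assms by (intro card_Un_disjoint) auto
  moreover have "E1 \<union> E2 - (a \<union> b) = (E1 - a) \<union> (E2 - b)" using assms by auto
  then have "card (E1 \<union> E2 - (a \<union> b)) = card (E1 - a) + card (E2 - b)"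
    using assms by (metis card_Un_disjoint finite_Diff Diff_disjoint Int_Diff inf_commute inf_bot_left)
  ultimately show ?thesis unfolding config_weight_def by (simp add: power_add)
qed

lemma perc_prob_product:
  assumes f1: "finite E1" and f2: "finite E2" and d: "E1 \<inter> E2 = {}"
  shows "perc_prob p (E1 \<union> E2) (\<lambda>\<omega>. A (\<omega> \<inter> E1) \<and> B (\<omega> \<inter> E2))
         = perc_prob p E1 A * perc_prob p E2 B"
proof -
  let ?h1 = "\<lambda>\<omega>. if A \<omega> then config_weight p E1 \<omega> else 0"
  let ?h2 = "\<lambda>\<omega>. if B \<omega> then config_weight p E2 \<omega> else 0"
  let ?h = "\<lambda>\<omega>. if A (\<omega> \<inter> E1) \<and> B (\<omega> \<inter> E2) then config_weight p (E1 \<union> E2) \<omega> else 0"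
  have "perc_prob p (E1 \<union> E2) (\<lambda>\<omega>. A (\<omega> \<inter> E1) \<and> B (\<omega> \<inter> E2)) = (\<Sum>\<omega>\<in>Pow (E1 \<union> E2). ?h \<omega>)"
    using f1 f2 by (simp add: perc_prob_eq_sum_Pow)
  also have "\<dots> = (\<Sum>x\<in>Pow E1 \<times> Pow E2. ?h (case x of (a, b) \<Rightarrow> a \<union> b))"
    by (rule sum.reindex_bij_betw[OF bij_betw_Un_Pow[OF d], symmetric])
  also have "\<dots> = (\<Sum>(a, b)\<in>Pow E1 \<times> Pow E2. ?h1 a * ?h2 b)"
  proof (rule sum.cong[OF refl], clarify)
    fix a b assume h: "a \<subseteq> E1" "b \<subseteq> E2"
    have "(a \<union> b) \<inter> E1 = a" "(a \<union> b) \<inter> E2 = b" using h d by auto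
    then show "?h (a \<union> b) = ?h1 a * ?h2 b" using config_weight_Un[OF f1 f2 d h] by simp
  qed
  also have "\<dots> = (\<Sum>a\<in>Pow E1. ?h1 a) * (\<Sum>b\<in>Pow E2. ?h2 b)"
    by (simp add: sum_product sum.cartesian_product)
  also have "\<dots> = perc_prob p E1 A * perc_prob p E2 B" using f1 f2 by (simp add: perc_prob_eq_sum_Pow)
  finally show ?thesis .
qed

lemma perc_prob_True: "finite E \<Longrightarrow> perc_prob p E (\<lambda>_. True) = 1"
  by (simp add: perc_prob_eq_sum_Pow sum_config_weight)

lemma perc_prob_restrict:
  assumes "finite F" "E \<subseteq> F"
  shows "perc_prob p F (\<lambda>\<omega>. G (\<omega> \<inter> E)) = perc_prob p E G"
proof -
  have fE: "finite E" using assms finite_subset by blast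
  have F: "F = E \<union> (F - E)" using assms by auto
  have "perc_prob p F (\<lambda>\<omega>. G (\<omega> \<inter> E)) = perc_prob p (E \<union> (F - E)) (\<lambda>\<omega>. G (\<omega> \<inter> E) \<and> (\<lambda>_. True) (\<omega> \<inter> (F - E)))"
    using F by simp
  also have "\<dots> = perc_prob p E G * perc_prob p (F - E) (\<lambda>_. True)"
    by (rule perc_prob_product) (use fE assms in auto)
  also have "\<dots> = perc_prob p E G" using perc_prob_True assms by simp
  finally show ?thesis .
qed

lemma perc_prob_indep:
  assumes F: "finite F" and sub: "E1 \<subseteq> F" "E2 \<subseteq> F" and disj: "E1 \<inter> E2 = {}"
    and loc: "\<And>\<omega>. A (\<omega> \<inter> E1) = A \<omega>" "\<And>\<omega>. B (\<omega> \<inter> E2) = B \<omega>"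
  shows "perc_prob p F (\<lambda>\<omega>. A \<omega> \<and> B \<omega>) = perc_prob p E1 A * perc_prob p E2 B"
proof -
  have fin: "finite E1" "finite E2" using F sub finite_subset by auto
  have "\<omega> \<inter> (E1 \<union> E2) \<inter> E1 = \<omega> \<inter> E1" "\<omega> \<inter> (E1 \<union> E2) \<inter> E2 = \<omega> \<inter> E2" for \<omega>
    by auto
  then have split: "(\<lambda>\<omega>. A \<omega> \<and> B \<omega>) = (\<lambda>\<omega>. (\<lambda>\<eta>. A (\<eta> \<inter> E1) \<and> B (\<eta> \<inter> E2)) (\<omega> \<inter> (E1 \<union> E2)))"
    by (simp only: loc)
  have "perc_prob p F (\<lambda>\<omega>. A \<omega> \<and> B \<omega>) = perc_prob p (E1 \<union> E2) (\<lambda>\<eta>. A (\<eta> \<inter> E1) \<and> B (\<eta> \<inter> E2))"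
    unfolding split by (rule perc_prob_restrict[OF F]) (use sub in auto)
  also have "\<dots> = perc_prob p E1 A * perc_prob p E2 B"
    by (rule perc_prob_product[OF fin disj])
  finally show ?thesis .
qed

lemma perc_prob_mono:
  assumes "finite E" "0 \<le> p" "p \<le> 1" "\<And>\<omega>. \<omega> \<subseteq> E \<Longrightarrow> A \<omega> \<Longrightarrow> B \<omega>"
  shows "perc_prob p E A \<le> perc_prob p E B"
  unfolding perc_prob_eq_sum_Pow[OF assms(1)]
  by (rule sum_mono) (use assms config_weight_nonneg in auto)

lemma perc_prob_nonneg: "0 \<le> p \<Longrightarrow> p \<le> 1 \<Longrightarrow> 0 \<le> perc_prob p E A"
  unfolding perc_prob_def config_weight_def[symmetric] by (rule sum_nonneg) (simp add: config_weight_nonneg)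

lemma perc_prob_le_1: "0 \<le> p \<Longrightarrow> p \<le> 1 \<Longrightarrow> finite E \<Longrightarrow> perc_prob p E A \<le> 1"
  using perc_prob_mono[of E p A "\<lambda>_. True"] perc_prob_True by simp

lemma perc_prob_disj_le:
  assumes "finite E" "0 \<le> p" "p \<le> 1"
  shows "perc_prob p E (\<lambda>\<omega>. A \<omega> \<or> B \<omega>) \<le> perc_prob p E A + perc_prob p E B"
  unfolding perc_prob_eq_sum_Pow[OF assms(1)] sum.distrib[symmetric]
  by (rule sum_mono) (use assms config_weight_nonneg in auto)

lemma perc_prob_Bex_le:
  assumes "0 \<le> p" "p \<le> 1" "finite I" "finite E"
  shows "perc_prob p E (\<lambda>\<omega>. \<exists>i\<in>I. A i \<omega>) \<le> (\<Sum>i\<in>I. perc_prob p E (A i))"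
  using assms(3)
proof (induction I rule: finite_induct)
  case empty
  then show ?case by (simp add: perc_prob_def)
next
  case (insert a I)
  have "perc_prob p E (\<lambda>\<omega>. \<exists>i\<in>insert a I. A i \<omega>) = perc_prob p E (\<lambda>\<omega>. A a \<omega> \<or> (\<exists>i\<in>I. A i \<omega>))"
    by simp
  also have "\<dots> \<le> perc_prob p E (A a) + perc_prob p E (\<lambda>\<omega>. \<exists>i\<in>I. A i \<omega>)" by (rule perc_prob_disj_le[OF assms(4,1,2)])
  also have "\<dots> \<le> perc_prob p E (A a) + (\<Sum>i\<in>I. perc_prob p E (A i))" using insert.IH by simp
  finally show ?case using insert by simp
qed

lemma sum_perc_prob_partition:
  assumes "finite E" "finite S"
  shows "(\<Sum>A\<in>S. perc_prob p E (\<lambda>\<omega>. X \<omega> = A \<and> P A \<omega>)) = perc_prob p E (\<lambda>\<omega>. X \<omega> \<in> S \<and> P (X \<omega>) \<omega>)"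
proof -
  have "(\<Sum>A\<in>S. perc_prob p E (\<lambda>\<omega>. X \<omega> = A \<and> P A \<omega>))
      = (\<Sum>A\<in>S. \<Sum>\<omega>\<in>Pow E. if X \<omega> = A \<and> P A \<omega> then config_weight p E \<omega> else 0)"
    using assms(1) by (simp add: perc_prob_eq_sum_Pow)
  also have "\<dots> = (\<Sum>\<omega>\<in>Pow E. \<Sum>A\<in>S. if X \<omega> = A \<and> P A \<omega> then config_weight p E \<omega> else 0)"
    by (rule sum.swap)
  also have "\<dots> = (\<Sum>\<omega>\<in>Pow E. if X \<omega> \<in> S \<and> P (X \<omega>) \<omega> then config_weight p E \<omega> else 0)"
  proof (rule sum.cong[OF refl])
    fix \<omega>
    have "(\<Sum>A\<in>S. if X \<omega> = A \<and> P A \<omega> then config_weight p E \<omega> else 0)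
        = (\<Sum>A\<in>S. if X \<omega> = A then (if P A \<omega> then config_weight p E \<omega> else 0) else 0)"
      by (rule sum.cong) auto
    also have "\<dots> = (if X \<omega> \<in> S then (if P (X \<omega>) \<omega> then config_weight p E \<omega> else 0) else 0)"
      using sum.delta'[OF assms(2), of "X \<omega>" "\<lambda>A. if P A \<omega> then config_weight p E \<omega> else 0"] by simp
    finally show "(\<Sum>A\<in>S. if X \<omega> = A \<and> P A \<omega> then config_weight p E \<omega> else 0)
        = (if X \<omega> \<in> S \<and> P (X \<omega>) \<omega> then config_weight p E \<omega> else 0)" by simp
  qed
  also have "\<dots> = perc_prob p E (\<lambda>\<omega>. X \<omega> \<in> S \<and> P (X \<omega>) \<omega>)"
    using assms(1) by (simp add: perc_prob_eq_sum_Pow)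
  finally show ?thesis .
qed

lemma perc_prob_less_1:
  assumes E: "finite E" and p: "0 \<le> p" "p < 1" and A: "\<not> A {}"
  shows "perc_prob p E A < 1"
proof -
  have s: "perc_prob p E A + perc_prob p E (\<lambda>\<omega>. \<not> A \<omega>) = 1"
  proof -
    have "perc_prob p E A + perc_prob p E (\<lambda>\<omega>. \<not> A \<omega>)
        = (\<Sum>\<omega>\<in>Pow E. (if A \<omega> then config_weight p E \<omega> else 0) + (if \<not> A \<omega> then config_weight p E \<omega> else 0))"
      unfolding perc_prob_eq_sum_Pow[OF E] sum.distrib ..
    also have "\<dots> = (\<Sum>\<omega>\<in>Pow E. config_weight p E \<omega>)" by (rule sum.cong) auto
    also have "\<dots> = 1" by (rule sum_config_weight[OF E])
    finally show ?thesis .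
  qed
  have "config_weight p E {} \<le> perc_prob p E (\<lambda>\<omega>. \<not> A \<omega>)"
  proof -
    have "(if \<not> A {} then config_weight p E {} else 0) \<le> (\<Sum>\<omega>\<in>Pow E. if \<not> A \<omega> then config_weight p E \<omega> else 0)"
      by (rule member_le_sum) (use E p config_weight_nonneg in auto)
    then show ?thesis unfolding perc_prob_eq_sum_Pow[OF E] using A by simp
  qed
  moreover have "0 < config_weight p E {}" unfolding config_weight_def using p by simp
  ultimately show ?thesis using s by linarith
qed

lemma perc_prob_at_1:
  assumes E: "finite E"
  shows "perc_prob 1 E A = (if A E then 1 else 0)"
proof -
  have "perc_prob 1 E A = (\<Sum>\<omega>\<in>Pow E. if E = \<omega> then (if A \<omega> then 1 else 0) else 0)"
    unfolding perc_prob_eq_sum_Pow[OF E]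
  proof (rule sum.cong[OF refl])
    fix \<omega> assume w: "\<omega> \<in> Pow E"
    have fin: "finite (E - \<omega>)" using E by simp
    have "card (E - \<omega>) = 0 \<longleftrightarrow> E = \<omega>" using w fin by auto
    then show "(if A \<omega> then config_weight 1 E \<omega> else 0) = (if E = \<omega> then (if A \<omega> then 1 else 0) else 0)"
      unfolding config_weight_def by (cases "card (E - \<omega>)") auto
  qed
  also have "\<dots> = (if E \<in> Pow E then (if A E then 1 else 0) else 0)"
    by (rule sum.delta') (simp add: E)
  also have "\<dots> = (if A E then 1 else 0)" by simp
  finally show ?thesis .
qed

definition edge_image :: "(vtx \<Rightarrow> vtx) \<Rightarrow> vtx set set \<Rightarrow> vtx set set" where
  "edge_image \<psi> S = (\<lambda>e. \<psi> ` e) ` S"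

lemma perc_prob_edge_image:
  assumes "inj \<psi>" "finite E"
  shows "perc_prob p (edge_image \<psi> E) G = perc_prob p E (\<lambda>\<omega>. G (edge_image \<psi> \<omega>))"
proof -
  have inj_edge: "inj (\<lambda>e. \<psi> ` e)" by (rule injI) (simp add: inj_image_eq_iff[OF assms(1)])
  have inj_config: "inj (edge_image \<psi>)" unfolding edge_image_def by (rule injI) (simp add: inj_image_eq_iff[OF inj_edge])
  have configs: "{\<omega>. \<omega> \<subseteq> edge_image \<psi> E \<and> G \<omega>} = edge_image \<psi> ` {\<omega>. \<omega> \<subseteq> E \<and> G (edge_image \<psi> \<omega>)}"
  proof
    show "{\<omega>. \<omega> \<subseteq> edge_image \<psi> E \<and> G \<omega>} \<subseteq> edge_image \<psi> ` {\<omega>. \<omega> \<subseteq> E \<and> G (edge_image \<psi> \<omega>)}"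
    proof
      fix \<omega> assume h: "\<omega> \<in> {\<omega>. \<omega> \<subseteq> edge_image \<psi> E \<and> G \<omega>}"
      define \<omega>' where "\<omega>' = {e\<in>E. \<psi> ` e \<in> \<omega>}"
      have "edge_image \<psi> \<omega>' = \<omega>" using h unfolding \<omega>'_def edge_image_def by auto
      then show "\<omega> \<in> edge_image \<psi> ` {\<omega>. \<omega> \<subseteq> E \<and> G (edge_image \<psi> \<omega>)}" using h unfolding \<omega>'_def by auto
    qed
    show "edge_image \<psi> ` {\<omega>. \<omega> \<subseteq> E \<and> G (edge_image \<psi> \<omega>)} \<subseteq> {\<omega>. \<omega> \<subseteq> edge_image \<psi> E \<and> G \<omega>}"
      unfolding edge_image_def by auto
  qed
  have card_eq: "card (edge_image \<psi> S) = card S" for S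
    unfolding edge_image_def by (rule card_image) (use inj_edge inj_on_subset in blast)
  have diff_eq: "edge_image \<psi> E - edge_image \<psi> \<omega> = edge_image \<psi> (E - \<omega>)" for \<omega>
    unfolding edge_image_def by (rule image_set_diff[OF inj_edge, symmetric])
  show ?thesis unfolding perc_prob_def configs
    by (subst sum.reindex) (use inj_config inj_on_subset in \<open>auto simp: card_eq diff_eq\<close>)
qed

lemma adj_sym: "adj k u v = adj k v u"
  unfolding adj_def by (auto split: prod.splits simp: abs_minus_commute add.commute add.left_commute)

lemma adj_planar_coords:
  assumes "adj k u v"
  shows "\<bar>fst u - fst v\<bar> \<le> 1" "\<bar>fst (snd u) - fst (snd v)\<bar> \<le> 1"
  using assms unfolding adj_def by (auto split: prod.splits)

lemma slab_edges_iff: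
  "{u, v} \<in> slab_edges k U \<longleftrightarrow> u \<in> U \<and> v \<in> U \<and> adj k u v"
proof
  assume "{u, v} \<in> slab_edges k U"
  then obtain u' v' where h: "{u, v} = {u', v'}" "u' \<in> U" "v' \<in> U" "adj k u' v'"
    unfolding slab_edges_def by auto
  then have "(u = u' \<and> v = v') \<or> (u = v' \<and> v = u')" by (metis doubleton_eq_iff)
  then show "u \<in> U \<and> v \<in> U \<and> adj k u v" using h adj_sym by metis
next
  assume "u \<in> U \<and> v \<in> U \<and> adj k u v"
  then show "{u, v} \<in> slab_edges k U" unfolding slab_edges_def by blast
qed

lemma mem_bar: "(x, y, z) \<in> bar k T \<longleftrightarrow> (x, y) \<in> T \<and> 0 \<le> z \<and> z \<le> int k"
  unfolding bar_def by auto

lemma bar_mono: "T \<subseteq> T' \<Longrightarrow> bar k T \<subseteq> bar k T'"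
  unfolding bar_def by auto

lemma finite_bar: "finite T \<Longrightarrow> finite (bar k T)"
proof -
  assume "finite T"
  have "bar k T \<subseteq> (\<lambda>((x, y), z). (x, y, z)) ` (T \<times> {0..int k})"
    unfolding bar_def by force
  then show ?thesis using \<open>finite T\<close> finite_subset by blast
qed

lemma finite_slab_edges: "finite U \<Longrightarrow> finite (slab_edges k U)"
proof -
  assume "finite U"
  have "slab_edges k U \<subseteq> (\<lambda>(u, v). {u, v}) ` (U \<times> U)"
    unfolding slab_edges_def by auto
  then show ?thesis using \<open>finite U\<close> finite_subset by blast
qed

lemma slab_edges_mono: "U \<subseteq> U' \<Longrightarrow> slab_edges k U \<subseteq> slab_edges k U'"
  unfolding slab_edges_def by blast

lemma slab_edges_disjoint:
  assumes "U \<inter> U' = {}" shows "slab_edges k U \<inter> slab_edges k U' = {}"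
proof (rule equals0I)
  fix e assume "e \<in> slab_edges k U \<inter> slab_edges k U'"
  then obtain u v u' v' where h: "e = {u, v}" "u \<in> U" "v \<in> U" "e = {u', v'}" "u' \<in> U'"
    unfolding slab_edges_def by blast
  have "u' \<in> e" using h(4) by simp
  then have "u' \<in> {u, v}" using h(1) by simp
  then show False using h assms by auto
qed

lemma open_pathD: "open_path \<omega> xs \<Longrightarrow> Suc i < length xs \<Longrightarrow> {xs ! i, xs ! Suc i} \<in> \<omega>"
  unfolding open_path_def by blast

definition path_segment :: "vtx list \<Rightarrow> nat \<Rightarrow> nat \<Rightarrow> vtx list" where
  "path_segment xs i j = map (\<lambda>l. xs ! (i + l)) [0..<Suc (j - i)]"

lemma open_path_segmentI:
  assumes "i \<le> j" "j < length xs" "\<And>l. i \<le> l \<Longrightarrow> l < j \<Longrightarrow> {xs ! l, xs ! Suc l} \<in> \<eta>"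
  shows "open_path \<eta> (path_segment xs i j)"
  unfolding open_path_def path_segment_def using assms by (auto simp del: upt_Suc)

lemma open_path_segment:
  "open_path \<omega> xs \<Longrightarrow> i \<le> j \<Longrightarrow> j < length xs \<Longrightarrow> open_path \<omega> (path_segment xs i j)"
  by (rule open_path_segmentI) (auto intro: open_pathD)

lemma hd_path_segment: "hd (path_segment xs i j) = xs ! i"
  unfolding path_segment_def by (simp add: hd_map del: upt_Suc)

lemma last_path_segment: "i \<le> j \<Longrightarrow> last (path_segment xs i j) = xs ! j"
  unfolding path_segment_def by (simp add: last_map del: upt_Suc)

lemma set_path_segment:
  assumes "i \<le> j"
  shows "set (path_segment xs i j) = {xs ! l | l. i \<le> l \<and> l \<le> j}"
proof -
  have "{xs ! l | l. i \<le> l \<and> l \<le> j} = (\<lambda>l. xs ! (i + l)) ` {0..j - i}"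
  proof (intro equalityI subsetI)
    fix x assume "x \<in> {xs ! l | l. i \<le> l \<and> l \<le> j}"
    then obtain l where "i \<le> l" "l \<le> j" "x = xs ! l" by blast
    then show "x \<in> (\<lambda>l. xs ! (i + l)) ` {0..j - i}"
      by (intro image_eqI[of _ _ "l - i"]) auto
  qed (use assms in force)
  then show ?thesis unfolding path_segment_def by (simp add: atLeastLessThanSuc_atLeastAtMost del: upt_Suc)
qed

lemma open_path_rev: "open_path \<omega> xs \<Longrightarrow> open_path \<omega> (rev xs)"
  unfolding open_path_def
proof (intro conjI allI impI)
  fix i assume h: "xs \<noteq> [] \<and> (\<forall>i. Suc i < length xs \<longrightarrow> {xs ! i, xs ! Suc i} \<in> \<omega>)" "Suc i < length (rev xs)"
  then have "{xs ! (length xs - Suc (Suc i)), xs ! Suc (length xs - Suc (Suc i))} \<in> \<omega>" by auto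
  moreover have "Suc (length xs - Suc (Suc i)) = length xs - Suc i" using h by auto
  ultimately show "{rev xs ! i, rev xs ! Suc i} \<in> \<omega>" using h by (simp add: rev_nth insert_commute)
qed auto

lemma connects_sym: "connects \<omega> A B \<Longrightarrow> connects \<omega> B A"
  unfolding connects_def using open_path_rev hd_rev last_rev by metis

lemma connects_mono: "connects \<omega> A B \<Longrightarrow> \<omega> \<subseteq> \<omega>' \<Longrightarrow> A \<subseteq> A' \<Longrightarrow> B \<subseteq> B' \<Longrightarrow> connects \<omega>' A' B'"
  unfolding connects_def open_path_def by blast

lemma open_path_map:
  assumes "open_path \<omega> xs"
  shows "open_path (edge_image \<psi> \<omega>) (map \<psi> xs)"
  unfolding open_path_def
proof (intro conjI allI impI)
  show "map \<psi> xs \<noteq> []" using assms open_path_def by auto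
  fix i assume i: "Suc i < length (map \<psi> xs)"
  then have "{xs ! i, xs ! Suc i} \<in> \<omega>" using open_pathD[OF assms] by simp
  moreover have "{map \<psi> xs ! i, map \<psi> xs ! Suc i} = \<psi> ` {xs ! i, xs ! Suc i}" using i by simp
  ultimately show "{map \<psi> xs ! i, map \<psi> xs ! Suc i} \<in> edge_image \<psi> \<omega>" unfolding edge_image_def by blast
qed

lemma connects_map: "connects \<omega> A B \<Longrightarrow> connects (edge_image \<psi> \<omega>) (\<psi> ` A) (\<psi> ` B)"
  unfolding connects_def
proof (elim exE conjE)
  fix xs assume h: "open_path \<omega> xs" "hd xs \<in> A" "last xs \<in> B"
  then have ne: "xs \<noteq> []" unfolding open_path_def by blast
  show "\<exists>ys. open_path (edge_image \<psi> \<omega>) ys \<and> hd ys \<in> \<psi> ` A \<and> last ys \<in> \<psi> ` B"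
  proof (rule exI[of _ "map \<psi> xs"], intro conjI)
    show "open_path (edge_image \<psi> \<omega>) (map \<psi> xs)" by (rule open_path_map[OF h(1)])
    show "hd (map \<psi> xs) \<in> \<psi> ` A" using h(2) ne by (simp add: hd_map)
    show "last (map \<psi> xs) \<in> \<psi> ` B" using h(3) ne by (simp add: last_map)
  qed
qed

lemma edge_image_inv: "bij \<psi> \<Longrightarrow> edge_image (inv \<psi>) (edge_image \<psi> \<omega>) = \<omega>"
  unfolding edge_image_def by (simp add: image_image bij_is_inj)

lemma connects_edge_image:
  assumes "bij \<psi>"
  shows "connects (edge_image \<psi> \<omega>) (\<psi> ` A) (\<psi> ` B) = connects \<omega> A B"
proof
  assume "connects (edge_image \<psi> \<omega>) (\<psi> ` A) (\<psi> ` B)"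
  then have "connects (edge_image (inv \<psi>) (edge_image \<psi> \<omega>)) (inv \<psi> ` \<psi> ` A) (inv \<psi> ` \<psi> ` B)"
    by (rule connects_map)
  moreover have "inv \<psi> ` \<psi> ` A = A" "inv \<psi> ` \<psi> ` B = B"
    using assms by (simp_all add: image_inv_f_f bij_is_inj)
  ultimately show "connects \<omega> A B" using edge_image_inv[OF assms] by simp
qed (rule connects_map)

lemma slab_edges_image:
  assumes "bij \<psi>" "\<And>u v. adj k (\<psi> u) (\<psi> v) = adj k u v"
  shows "slab_edges k (\<psi> ` U) = edge_image \<psi> (slab_edges k U)"
proof
  show "slab_edges k (\<psi> ` U) \<subseteq> edge_image \<psi> (slab_edges k U)"
  proof
    fix e assume "e \<in> slab_edges k (\<psi> ` U)"
    then obtain u v where "e = {\<psi> u, \<psi> v}" "u \<in> U" "v \<in> U" "adj k (\<psi> u) (\<psi> v)"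
      unfolding slab_edges_def by blast
    then have "e = \<psi> ` {u, v}" "{u, v} \<in> slab_edges k U" using assms(2) slab_edges_iff by auto
    then show "e \<in> edge_image \<psi> (slab_edges k U)" unfolding edge_image_def by blast
  qed
  show "edge_image \<psi> (slab_edges k U) \<subseteq> slab_edges k (\<psi> ` U)"
  proof
    fix e assume "e \<in> edge_image \<psi> (slab_edges k U)"
    then obtain u v where "e = \<psi> ` {u, v}" "u \<in> U" "v \<in> U" "adj k u v"
      unfolding slab_edges_def edge_image_def by blast
    then show "e \<in> slab_edges k (\<psi> ` U)" using assms(2) slab_edges_iff[of "\<psi> u" "\<psi> v"] by auto
  qed
qed

lemma open_path_subset_closed:
  assumes op: "open_path \<eta> xs" and hd: "hd xs \<in> A"
    and closed: "\<And>u v. u \<in> A \<Longrightarrow> {u, v} \<in> \<eta> \<Longrightarrow> v \<in> A"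
  shows "set xs \<subseteq> A"
proof -
  have "i < length xs \<longrightarrow> xs ! i \<in> A" for i
  proof (induction i)
    case 0
    then show ?case using op hd by (auto simp: open_path_def hd_conv_nth)
  next
    case (Suc i)
    then show ?case using closed open_pathD[OF op] by (metis Suc_lessD)
  qed
  then show ?thesis by (metis in_set_conv_nth subsetI)
qed

lemma open_path_stays_in:
  assumes "open_path (\<omega> \<inter> slab_edges k U) xs" "hd xs \<in> U"
  shows "\<forall>v\<in>set xs. v \<in> U"
  using open_path_subset_closed[OF assms] slab_edges_iff by blast

lemma open_path_adj:
  assumes "open_path \<omega> xs" "\<omega> \<subseteq> slab_edges k U" "Suc i < length xs"
  shows "adj k (xs ! i) (xs ! Suc i)"
  using open_pathD[OF assms(1,3)] assms(2) slab_edges_iff by blast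

lemma open_path_restrict:
  assumes "open_path \<omega> xs" "\<omega> \<subseteq> slab_edges k U'" "set xs \<subseteq> U"
  shows "open_path (\<omega> \<inter> slab_edges k U) xs"
  unfolding open_path_def
proof (intro conjI allI impI)
  show "xs \<noteq> []" using assms(1) open_path_def by blast
  fix i assume i: "Suc i < length xs"
  have a1: "{xs ! i, xs ! Suc i} \<in> \<omega>" using open_pathD[OF assms(1) i] .
  have a2: "adj k (xs ! i) (xs ! Suc i)" using open_path_adj[OF assms(1,2) i] .
  have a3: "xs ! i \<in> U" using assms(3) i nth_mem[of i xs] by auto
  have a4: "xs ! Suc i \<in> U" using assms(3) i nth_mem[of "Suc i" xs] by auto
  show "{xs ! i, xs ! Suc i} \<in> \<omega> \<inter> slab_edges k U"
    using a1 a2 a3 a4 by (simp add: slab_edges_iff)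
qed

lemma connects_snoc:
  assumes "connects \<eta> {a} {u}" "{u, v} \<in> \<eta>"
  shows "connects \<eta> {a} {v}"
proof -
  obtain ys where ys: "open_path \<eta> ys" "hd ys = a" "last ys = u" using assms(1) unfolding connects_def by blast
  have ne: "ys \<noteq> []" using ys(1) open_path_def by blast
  have "open_path \<eta> (ys @ [v])"
    unfolding open_path_def
  proof (intro conjI allI impI)
    fix i assume i: "Suc i < length (ys @ [v])"
    show "{(ys @ [v]) ! i, (ys @ [v]) ! Suc i} \<in> \<eta>"
    proof (cases "Suc i < length ys")
      case True
      then show ?thesis using open_pathD[OF ys(1) True] by (simp add: nth_append)
    next
      case False
      then have "Suc i = length ys" using i by simp
      then have li: "i = length ys - 1" by simp
      then have "(ys @ [v]) ! i = u" "(ys @ [v]) ! Suc i = v"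
        using ys(3) ne \<open>Suc i = length ys\<close> by (auto simp: nth_append last_conv_nth)
      then show ?thesis using assms(2) by simp
    qed
  qed simp
  then show ?thesis unfolding connects_def using ys ne by (intro exI[of _ "ys @ [v]"]) auto
qed

lemma connects_refl: "connects \<eta> {a} {a}"
  unfolding connects_def open_path_def by (intro exI[of _ "[a]"]) auto

lemma connects_hd_nth:
  assumes "open_path \<eta> xs" "hd xs = a" "i < length xs"
  shows "connects \<eta> {a} {xs ! i}"
proof -
  have ne: "xs \<noteq> []" using assms(1) open_path_def by blast
  show ?thesis unfolding connects_def
    using open_path_segment[OF assms(1) le0 assms(3)] assms(2) ne
    by (intro exI[of _ "path_segment xs 0 i"]) (auto simp: hd_path_segment last_path_segment hd_conv_nth)
qed

definition bar_edges :: "nat \<Rightarrow> (int \<times> int) set \<Rightarrow> vtx set set" where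
  "bar_edges k T = slab_edges k (bar k T)"

definition connects_in :: "nat \<Rightarrow> (int \<times> int) set \<Rightarrow> (int \<times> int) set \<Rightarrow> (int \<times> int) set \<Rightarrow> vtx set set \<Rightarrow> bool" where
  "connects_in k T A B \<omega> = connects (\<omega> \<inter> bar_edges k T) (bar k A) (bar k B)"

definition crossing_prob :: "nat \<Rightarrow> real \<Rightarrow> (int \<times> int) set \<Rightarrow> (int \<times> int) set \<Rightarrow> (int \<times> int) set \<Rightarrow> real" where
  "crossing_prob k p T A B = perc_prob p (bar_edges k T) (\<lambda>\<omega>. connects \<omega> (bar k A) (bar k B))"

lemma finite_bar_edges: "finite T \<Longrightarrow> finite (bar_edges k T)"
  unfolding bar_edges_def by (intro finite_slab_edges finite_bar)

lemma bar_edges_mono: "T \<subseteq> T' \<Longrightarrow> bar_edges k T \<subseteq> bar_edges k T'"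
  unfolding bar_edges_def by (intro slab_edges_mono bar_mono)

lemma perc_prob_connects_in:
  assumes "finite F" "bar_edges k T \<subseteq> F"
  shows "perc_prob p F (connects_in k T A B) = crossing_prob k p T A B"
  unfolding connects_in_def crossing_prob_def by (rule perc_prob_restrict[OF assms])

lemma connects_in_restrict: "T \<subseteq> T' \<Longrightarrow> connects_in k T A B (\<omega> \<inter> bar_edges k T') = connects_in k T A B \<omega>"
proof -
  assume "T \<subseteq> T'"
  then have "\<omega> \<inter> bar_edges k T' \<inter> bar_edges k T = \<omega> \<inter> bar_edges k T" using bar_edges_mono by blast
  then show ?thesis unfolding connects_in_def by simp
qed

lemma crossing_prob_mono:
  assumes "finite T'" "T \<subseteq> T'" "A \<subseteq> A'" "B \<subseteq> B'" "0 \<le> p" "p \<le> 1"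
  shows "crossing_prob k p T A B \<le> crossing_prob k p T' A' B'"
proof -
  have f: "finite (bar_edges k T')" using assms finite_bar_edges by blast
  have "crossing_prob k p T A B = perc_prob p (bar_edges k T') (connects_in k T A B)"
    using perc_prob_connects_in[OF f bar_edges_mono[OF assms(2)]] by simp
  also have "\<dots> \<le> perc_prob p (bar_edges k T') (connects_in k T' A' B')"
  proof (rule perc_prob_mono[OF f assms(5,6)])
    fix \<omega> assume "connects_in k T A B \<omega>"
    then show "connects_in k T' A' B' \<omega>" unfolding connects_in_def
      by (rule connects_mono) (use bar_edges_mono[OF assms(2)] bar_mono assms(3,4) in auto)
  qed
  also have "\<dots> = crossing_prob k p T' A' B'" using perc_prob_connects_in[OF f] by simp
  finally show ?thesis .
qed

definition lift_planar :: "(int \<times> int \<Rightarrow> int \<times> int) \<Rightarrow> vtx \<Rightarrow> vtx" where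
  "lift_planar \<phi> v = (fst (\<phi> (fst v, fst (snd v))), snd (\<phi> (fst v, fst (snd v))), snd (snd v))"

lemma lift_planar_bar: "lift_planar \<phi> ` bar k T = bar k (\<phi> ` T)"
proof
  show "lift_planar \<phi> ` bar k T \<subseteq> bar k (\<phi> ` T)" unfolding lift_planar_def bar_def by force
  show "bar k (\<phi> ` T) \<subseteq> lift_planar \<phi> ` bar k T"
  proof
    fix v assume "v \<in> bar k (\<phi> ` T)"
    obtain x y z where v0: "v = (x, y, z)" by (cases v)
    then have h: "(x, y) \<in> \<phi> ` T" "0 \<le> z" "z \<le> int k" using \<open>v \<in> bar k (\<phi> ` T)\<close> mem_bar by auto
    then obtain t where t: "t \<in> T" "(x, y) = \<phi> t" by blast
    then have "v = lift_planar \<phi> (fst t, snd t, z)" "(fst t, snd t, z) \<in> bar k T"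
      unfolding lift_planar_def using v0 h mem_bar t(2)[symmetric] by auto
    then show "v \<in> lift_planar \<phi> ` bar k T" by blast
  qed
qed

lemma bij_lift_planar:
  assumes "bij \<phi>" shows "bij (lift_planar \<phi>)"
proof -
  have "lift_planar (inv \<phi>) (lift_planar \<phi> v) = v" for v
    unfolding lift_planar_def using assms by (simp add: bij_is_inj)
  moreover have "lift_planar \<phi> (lift_planar (inv \<phi>) v) = v" for v
    unfolding lift_planar_def using assms by (simp add: bij_is_surj surj_f_inv_f)
  ultimately show ?thesis by (metis bij_betw_byWitness subset_UNIV surj_def)
qed

lemma adj_lift_planar:
  assumes "\<And>x1 y1 x2 y2. \<bar>fst (\<phi> (x1, y1)) - fst (\<phi> (x2, y2))\<bar> + \<bar>snd (\<phi> (x1, y1)) - snd (\<phi> (x2, y2))\<bar>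
      = \<bar>x1 - x2\<bar> + \<bar>y1 - y2\<bar>"
  shows "adj k (lift_planar \<phi> u) (lift_planar \<phi> v) = adj k u v"
  using assms[of "fst u" "fst (snd u)" "fst v" "fst (snd v)"]
  unfolding adj_def lift_planar_def in_slab_def by (auto split: prod.splits)

lemma crossing_prob_isometry:
  assumes "bij \<phi>" "finite T"
    "\<And>x1 y1 x2 y2. \<bar>fst (\<phi> (x1, y1)) - fst (\<phi> (x2, y2))\<bar> + \<bar>snd (\<phi> (x1, y1)) - snd (\<phi> (x2, y2))\<bar>
      = \<bar>x1 - x2\<bar> + \<bar>y1 - y2\<bar>"
  shows "crossing_prob k p (\<phi> ` T) (\<phi> ` A) (\<phi> ` B) = crossing_prob k p T A B"
proof -
  have b: "bij (lift_planar \<phi>)" using bij_lift_planar[OF assms(1)] .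
  have e: "bar_edges k (\<phi> ` T) = edge_image (lift_planar \<phi>) (bar_edges k T)"
    unfolding bar_edges_def lift_planar_bar[symmetric] by (rule slab_edges_image[OF b adj_lift_planar[OF assms(3)]])
  have "crossing_prob k p (\<phi> ` T) (\<phi> ` A) (\<phi> ` B)
      = perc_prob p (edge_image (lift_planar \<phi>) (bar_edges k T)) (\<lambda>\<omega>. connects \<omega> (lift_planar \<phi> ` bar k A) (lift_planar \<phi> ` bar k B))"
    unfolding crossing_prob_def e lift_planar_bar ..
  also have "\<dots> = perc_prob p (bar_edges k T) (\<lambda>\<omega>. connects (edge_image (lift_planar \<phi>) \<omega>) (lift_planar \<phi> ` bar k A) (lift_planar \<phi> ` bar k B))"
    by (rule perc_prob_edge_image) (use b bij_is_inj finite_bar_edges assms(2) in auto)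
  also have "\<dots> = crossing_prob k p T A B" unfolding crossing_prob_def connects_edge_image[OF b] ..
  finally show ?thesis .
qed

definition translate :: "int \<Rightarrow> int \<Rightarrow> int \<times> int \<Rightarrow> int \<times> int" where
  "translate a b = (\<lambda>(x, y). (x + a, y + b))"

lemma bij_translate: "bij (translate a b)"
proof -
  have "translate (-a) (-b) (translate a b v) = v" "translate a b (translate (-a) (-b) v) = v" for v
    unfolding translate_def by (auto split: prod.splits)
  then show ?thesis by (metis bij_betw_byWitness subset_UNIV surj_def)
qed

lemma translate_rect: "translate a b ` ({x0..x1} \<times> {y0..y1}) = {x0 + a..x1 + a} \<times> {y0 + b..y1 + b}"
proof
  show "translate a b ` ({x0..x1} \<times> {y0..y1}) \<subseteq> {x0 + a..x1 + a} \<times> {y0 + b..y1 + b}"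
    unfolding translate_def by auto
  show "{x0 + a..x1 + a} \<times> {y0 + b..y1 + b} \<subseteq> translate a b ` ({x0..x1} \<times> {y0..y1})"
  proof
    fix v assume "v \<in> {x0 + a..x1 + a} \<times> {y0 + b..y1 + b}"
    then obtain x y where "v = (x, y)" "x0 + a \<le> x" "x \<le> x1 + a" "y0 + b \<le> y" "y \<le> y1 + b" by auto
    then have "v = translate a b (x - a, y - b)" "(x - a, y - b) \<in> {x0..x1} \<times> {y0..y1}"
      unfolding translate_def by auto
    then show "v \<in> translate a b ` ({x0..x1} \<times> {y0..y1})" by blast
  qed
qed

lemma crossing_prob_translate:
  "crossing_prob k p ({x0 + a..x1 + a} \<times> {y0 + b..y1 + b}) ({u0 + a..u1 + a} \<times> {v0 + b..v1 + b})
      ({s0 + a..s1 + a} \<times> {t0 + b..t1 + b})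
   = crossing_prob k p ({x0..x1} \<times> {y0..y1}) ({u0..u1} \<times> {v0..v1}) ({s0..s1} \<times> {t0..t1})"
  using crossing_prob_isometry[OF bij_translate, of "{x0..x1} \<times> {y0..y1}" a b k p
      "{u0..u1} \<times> {v0..v1}" "{s0..s1} \<times> {t0..t1}"]
  unfolding translate_rect by (simp add: translate_def)

lemma crossing_prob_swap:
  "crossing_prob k p (B1 \<times> A1) (B2 \<times> A2) (B3 \<times> A3) = crossing_prob k p (A1 \<times> B1) (A2 \<times> B2) (A3 \<times> B3)"
  if "finite A1" "finite B1"
  using crossing_prob_isometry[of prod.swap "A1 \<times> B1" k p "A2 \<times> B2" "A3 \<times> B3"] that
  unfolding product_swap by (simp add: add.commute)

section \<open>Crossings of strips\<close>

lemma discrete_ivt: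
  fixes h :: "nat \<Rightarrow> int"
  assumes "h 0 \<le> s" "s \<le> t" "t \<le> h n" "\<And>i. i < n \<Longrightarrow> \<bar>h (Suc i) - h i\<bar> \<le> 1"
  shows "\<exists>i j. i \<le> j \<and> j \<le> n \<and> h i = s \<and> h j = t \<and> (\<forall>l. i \<le> l \<and> l \<le> j \<longrightarrow> s \<le> h l \<and> h l \<le> t)"
proof -
  define j where "j = (LEAST j. t \<le> h j)"
  have tj: "t \<le> h j" unfolding j_def by (rule LeastI[of _ n]) (rule assms(3))
  have jn: "j \<le> n" unfolding j_def by (rule Least_le) (rule assms(3))
  have below: "h l < t" if "l < j" for l
    using not_less_Least[of l "\<lambda>j. t \<le> h j"] that unfolding j_def by simp
  have hj: "h j = t"
  proof (cases j)
    case 0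
    then show ?thesis using tj assms(1,2) by simp
  next
    case (Suc j')
    then have "h j' < t" using below by simp
    moreover have "\<bar>h (Suc j') - h j'\<bar> \<le> 1" using assms(4) jn Suc by simp
    ultimately show ?thesis using tj Suc by simp
  qed
  define S where "S = {i. i \<le> j \<and> h i \<le> s}"
  have finS: "finite S" unfolding S_def by simp
  have S0: "0 \<in> S" unfolding S_def using assms(1) by simp
  define i where "i = Max S"
  have iS: "i \<in> S" unfolding i_def using finS S0 Max_in by blast
  have ij: "i \<le> j" and his: "h i \<le> s" using iS unfolding S_def by auto
  have above: "s < h l" if "i < l" "l \<le> j" for l
  proof (rule ccontr)
    assume "\<not> s < h l"
    then have "l \<in> S" unfolding S_def using that by simp
    then have "l \<le> i" unfolding i_def using finS by simp
    then show False using that by simp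
  qed
  have hi: "h i = s"
  proof (cases "i = j")
    case True
    then show ?thesis using his hj assms(2) by simp
  next
    case False
    then have "s < h (Suc i)" using above ij by simp
    moreover have "\<bar>h (Suc i) - h i\<bar> \<le> 1" using assms(4) ij jn False by simp
    ultimately show ?thesis using his by simp
  qed
  have "\<forall>l. i \<le> l \<and> l \<le> j \<longrightarrow> s \<le> h l \<and> h l \<le> t"
  proof (intro allI impI)
    fix l assume l: "i \<le> l \<and> l \<le> j"
    have "s \<le> h l" using above[of l] hi l by (cases "l = i") auto
    moreover have "h l \<le> t" using below[of l] hj l by (cases "l = j") auto
    ultimately show "s \<le> h l \<and> h l \<le> t" by simp
  qed
  then show ?thesis using ij jn hi hj by blast
qed

lemma discrete_ivt_between:
  fixes h :: "nat \<Rightarrow> int"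
  assumes "p \<le> n" "q \<le> n" "h p \<le> s" "s \<le> t" "t \<le> h q" "\<And>i. i < n \<Longrightarrow> \<bar>h (Suc i) - h i\<bar> \<le> 1"
  shows "\<exists>i j. i \<le> j \<and> j \<le> n \<and> ((h i = s \<and> h j = t) \<or> (h i = t \<and> h j = s)) \<and>
     (\<forall>l. i \<le> l \<and> l \<le> j \<longrightarrow> s \<le> h l \<and> h l \<le> t)"
proof (cases "p \<le> q")
  case True
  have "\<exists>i j. i \<le> j \<and> j \<le> q - p \<and> h (p + i) = s \<and> h (p + j) = t \<and>
      (\<forall>l. i \<le> l \<and> l \<le> j \<longrightarrow> s \<le> h (p + l) \<and> h (p + l) \<le> t)"
    by (rule discrete_ivt[of "\<lambda>l. h (p + l)"]) (use assms True in auto)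
  then obtain i j where ij: "i \<le> j" "j \<le> q - p" "h (p + i) = s" "h (p + j) = t"
    "\<forall>l. i \<le> l \<and> l \<le> j \<longrightarrow> s \<le> h (p + l) \<and> h (p + l) \<le> t" by blast
  have "\<forall>l. p + i \<le> l \<and> l \<le> p + j \<longrightarrow> s \<le> h l \<and> h l \<le> t"
  proof (intro allI impI)
    fix l assume a: "p + i \<le> l \<and> l \<le> p + j"
    then have "i \<le> l - p \<and> l - p \<le> j" by arith
    moreover have "p + (l - p) = l" using a by arith
    ultimately show "s \<le> h l \<and> h l \<le> t" using ij(5)[rule_format, of "l - p"] by simp
  qed
  then show ?thesis using ij assms True by (intro exI[of _ "p + i"] exI[of _ "p + j"]) auto
next
  case False
  have "\<exists>i j. i \<le> j \<and> j \<le> p - q \<and> - h (q + i) = - t \<and> - h (q + j) = - s \<and>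
      (\<forall>l. i \<le> l \<and> l \<le> j \<longrightarrow> - t \<le> - h (q + l) \<and> - h (q + l) \<le> - s)"
  proof (rule discrete_ivt[of "\<lambda>l. - h (q + l)"])
    fix i assume "i < p - q"
    then have "q + i < n" using assms False by arith
    then have "\<bar>h (Suc (q + i)) - h (q + i)\<bar> \<le> 1" using assms(6) by blast
    then show "\<bar>- h (q + Suc i) - - h (q + i)\<bar> \<le> 1" by (simp add: abs_minus_commute)
  qed (use assms False in auto)
  then obtain i j where ij: "i \<le> j" "j \<le> p - q" "h (q + i) = t" "h (q + j) = s"
    "\<forall>l. i \<le> l \<and> l \<le> j \<longrightarrow> s \<le> h (q + l) \<and> h (q + l) \<le> t" by auto
  have "\<forall>l. q + i \<le> l \<and> l \<le> q + j \<longrightarrow> s \<le> h l \<and> h l \<le> t"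
  proof (intro allI impI)
    fix l assume a: "q + i \<le> l \<and> l \<le> q + j"
    then have "i \<le> l - q \<and> l - q \<le> j" by arith
    moreover have "q + (l - q) = l" using a by arith
    ultimately show "s \<le> h l \<and> h l \<le> t" using ij(5)[rule_format, of "l - q"] by simp
  qed
  then show ?thesis using ij assms False by (intro exI[of _ "q + i"] exI[of _ "q + j"]) auto
qed

text \<open>Rectangles, sides and coordinates oriented by a flag \<open>d\<close>: a crossing of
  \<open>orect d a1 a2 b1 b2\<close> runs from the side \<open>along d = a1\<close> to the side \<open>along d = a2\<close>,
  in the first planar coordinate if \<open>d\<close> holds and in the second otherwise.\<close>

definition orect :: "bool \<Rightarrow> int \<Rightarrow> int \<Rightarrow> int \<Rightarrow> int \<Rightarrow> (int \<times> int) set" where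
  "orect d a1 a2 b1 b2 = (if d then {a1..a2} \<times> {b1..b2} else {b1..b2} \<times> {a1..a2})"

definition oside :: "bool \<Rightarrow> int \<Rightarrow> int \<Rightarrow> int \<Rightarrow> (int \<times> int) set" where
  "oside d a b1 b2 = (if d then {a} \<times> {b1..b2} else {b1..b2} \<times> {a})"

definition crosses :: "nat \<Rightarrow> bool \<Rightarrow> int \<Rightarrow> int \<Rightarrow> int \<Rightarrow> int \<Rightarrow> vtx set set \<Rightarrow> bool" where
  "crosses k d a1 a2 b1 b2 = connects_in k (orect d a1 a2 b1 b2) (oside d a1 b1 b2) (oside d a2 b1 b2)"

definition along :: "bool \<Rightarrow> vtx \<Rightarrow> int" where
  "along d v = (if d then fst v else fst (snd v))"

definition across :: "bool \<Rightarrow> vtx \<Rightarrow> int" where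
  "across d v = (if d then fst (snd v) else fst v)"

definition f_easy :: "nat \<Rightarrow> real \<Rightarrow> int \<Rightarrow> real" where
  "f_easy k p N = f_cross k p N (2 * N)"

lemma along_across_Not: "along (\<not> d) v = across d v" "across (\<not> d) v = along d v"
  unfolding along_def across_def by auto

lemma mem_bar_orect:
  "v \<in> bar k (orect d a1 a2 b1 b2) \<longleftrightarrow>
    a1 \<le> along d v \<and> along d v \<le> a2 \<and> b1 \<le> across d v \<and> across d v \<le> b2 \<and> in_slab k v"
  by (cases v) (auto simp: orect_def along_def across_def mem_bar in_slab_def)

lemma mem_bar_oside:
  "v \<in> bar k (oside d a b1 b2) \<longleftrightarrow> along d v = a \<and> b1 \<le> across d v \<and> across d v \<le> b2 \<and> in_slab k v"
  by (cases v) (auto simp: oside_def along_def across_def mem_bar in_slab_def)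

lemma adj_along_across:
  assumes "adj k u v"
  shows "\<bar>along d u - along d v\<bar> \<le> 1" "\<bar>across d u - across d v\<bar> \<le> 1" "in_slab k u" "in_slab k v"
  using adj_planar_coords[OF assms] assms unfolding along_def across_def adj_def by auto

lemma finite_orect: "finite (orect d a1 a2 b1 b2)"
  unfolding orect_def by simp

lemma orect_mono:
  "a1' \<le> a1 \<Longrightarrow> a2 \<le> a2' \<Longrightarrow> b1' \<le> b1 \<Longrightarrow> b2 \<le> b2' \<Longrightarrow> orect d a1 a2 b1 b2 \<subseteq> orect d a1' a2' b1' b2'"
  unfolding orect_def by auto

lemma f_easy_eq_crossing_prob: "f_easy k p N = crossing_prob k p ({0..N} \<times> {0..2*N}) ({0} \<times> {0..2*N}) ({N} \<times> {0..2*N})"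
  unfolding f_easy_def f_cross_def crossing_prob_def bar_edges_def by simp

lemma crossing_prob_rect_le_f_easy:
  assumes "0 \<le> p" "p \<le> 1" "0 \<le> h" "h \<le> 2 * N"
  shows "crossing_prob k p ({a..a+N} \<times> {b..b+h}) ({a} \<times> {b..b+h}) ({a+N} \<times> {b..b+h}) \<le> f_easy k p N"
proof -
  have "crossing_prob k p ({a..a+N} \<times> {b..b+h}) ({a} \<times> {b..b+h}) ({a+N} \<times> {b..b+h})
      = crossing_prob k p ({0+a..N+a} \<times> {0+b..h+b}) ({0+a..0+a} \<times> {0+b..h+b}) ({N+a..N+a} \<times> {0+b..h+b})"
    by (simp add: add.commute)
  also have "\<dots> = crossing_prob k p ({0..N} \<times> {0..h}) ({0..0} \<times> {0..h}) ({N..N} \<times> {0..h})"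
    by (rule crossing_prob_translate)
  also have "\<dots> \<le> crossing_prob k p ({0..N} \<times> {0..2*N}) ({0} \<times> {0..2*N}) ({N} \<times> {0..2*N})"
    by (rule crossing_prob_mono) (use assms in auto)
  finally show ?thesis using f_easy_eq_crossing_prob by simp
qed

lemma crossing_prob_orect_le_f_easy:
  assumes "0 \<le> p" "p \<le> 1" "0 \<le> h" "h \<le> 2 * N"
  shows "crossing_prob k p (orect d a (a+N) b (b+h)) (oside d a b (b+h)) (oside d (a+N) b (b+h)) \<le> f_easy k p N"
proof (cases d)
  case True
  then show ?thesis using crossing_prob_rect_le_f_easy[OF assms] unfolding orect_def oside_def by simp
next
  case False
  have "crossing_prob k p (orect d a (a+N) b (b+h)) (oside d a b (b+h)) (oside d (a+N) b (b+h))
     = crossing_prob k p ({b..b+h} \<times> {a..a+N}) ({b..b+h} \<times> {a}) ({b..b+h} \<times> {a+N})"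
    unfolding orect_def oside_def using False by simp
  also have "\<dots> = crossing_prob k p ({a..a+N} \<times> {b..b+h}) ({a} \<times> {b..b+h}) ({a+N} \<times> {b..b+h})"
    by (rule crossing_prob_swap) auto
  finally show ?thesis using crossing_prob_rect_le_f_easy[OF assms] by simp
qed

lemma open_path_level_crossing:
  fixes g :: "vtx \<Rightarrow> int" and s t :: int
  assumes op: "open_path (\<omega> \<inter> slab_edges k U) P"
    and gadj: "\<And>u v. adj k u v \<Longrightarrow> \<bar>g u - g v\<bar> \<le> 1"
    and pq: "p < length P" "q < length P" "g (P ! p) \<le> s" "s \<le> t" "t \<le> g (P ! q)"
  shows "\<exists>zs. open_path (\<omega> \<inter> slab_edges k U) zs \<and> set zs \<subseteq> set P \<and>
     ((g (hd zs) = s \<and> g (last zs) = t) \<or> (g (hd zs) = t \<and> g (last zs) = s)) \<and>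
     (\<forall>v\<in>set zs. s \<le> g v \<and> g v \<le> t)"
proof -
  define n where "n = length P - 1"
  have steps: "\<bar>g (P ! Suc i) - g (P ! i)\<bar> \<le> 1" if "i < n" for i
  proof -
    have "adj k (P ! i) (P ! Suc i)"
      by (rule open_path_adj[OF op Int_lower2]) (use that n_def in auto)
    then have "\<bar>g (P ! i) - g (P ! Suc i)\<bar> \<le> 1" by (rule gadj)
    then show ?thesis by (auto simp: abs_le_iff)
  qed
  obtain i j where ij: "i \<le> j" "j \<le> n" "((g (P ! i) = s \<and> g (P ! j) = t) \<or> (g (P ! i) = t \<and> g (P ! j) = s))"
    "\<forall>l. i \<le> l \<and> l \<le> j \<longrightarrow> s \<le> g (P ! l) \<and> g (P ! l) \<le> t"
  proof -
    have "p \<le> n" "q \<le> n" using pq n_def by auto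
    from discrete_ivt_between[of p n q "\<lambda>l. g (P ! l)" s t, OF this pq(3,4,5) steps] show ?thesis
      using that by blast
  qed
  have jl: "j < length P" using ij(2) pq n_def by auto
  show ?thesis
  proof (rule exI[of _ "path_segment P i j"], intro conjI)
    show "open_path (\<omega> \<inter> slab_edges k U) (path_segment P i j)" by (rule open_path_segment[OF op ij(1) jl])
    show "set (path_segment P i j) \<subseteq> set P" unfolding set_path_segment[OF ij(1)] using jl by auto
    show "(g (hd (path_segment P i j)) = s \<and> g (last (path_segment P i j)) = t) \<or>
        (g (hd (path_segment P i j)) = t \<and> g (last (path_segment P i j)) = s)"
      unfolding hd_path_segment last_path_segment[OF ij(1)] using ij(3) .
    show "\<forall>v\<in>set (path_segment P i j). s \<le> g v \<and> g v \<le> t"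
      unfolding set_path_segment[OF ij(1)] using ij(4) by auto
  qed
qed

lemma crosses_of_open_path:
  assumes op: "open_path (\<omega> \<inter> slab_edges k U) zs"
    and inside: "\<forall>v\<in>set zs. in_slab k v \<and> a1 \<le> along d v \<and> along d v \<le> a2 \<and> b1 \<le> across d v \<and> across d v \<le> b2"
    and ends: "(along d (hd zs) = a1 \<and> along d (last zs) = a2) \<or> (along d (hd zs) = a2 \<and> along d (last zs) = a1)"
  shows "crosses k d a1 a2 b1 b2 \<omega>"
proof -
  have ne: "zs \<noteq> []" using op open_path_def by blast
  have sub: "set zs \<subseteq> bar k (orect d a1 a2 b1 b2)" using inside mem_bar_orect by blast
  have "open_path ((\<omega> \<inter> slab_edges k U) \<inter> slab_edges k (bar k (orect d a1 a2 b1 b2))) zs"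
    by (rule open_path_restrict[OF op _ sub]) auto
  then have op2: "open_path (\<omega> \<inter> bar_edges k (orect d a1 a2 b1 b2)) zs"
    unfolding bar_edges_def open_path_def by blast
  have hl: "hd zs \<in> set zs" "last zs \<in> set zs" using ne by auto
  show ?thesis
    using ends
  proof
    assume e: "along d (hd zs) = a1 \<and> along d (last zs) = a2"
    then have "hd zs \<in> bar k (oside d a1 b1 b2)" "last zs \<in> bar k (oside d a2 b1 b2)"
      using inside hl mem_bar_oside by auto
    then show ?thesis unfolding crosses_def connects_in_def connects_def using op2 by blast
  next
    assume e: "along d (hd zs) = a2 \<and> along d (last zs) = a1"
    then have "hd zs \<in> bar k (oside d a2 b1 b2)" "last zs \<in> bar k (oside d a1 b1 b2)"
      using inside hl mem_bar_oside by auto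
    then have "connects (\<omega> \<inter> bar_edges k (orect d a1 a2 b1 b2)) (bar k (oside d a2 b1 b2)) (bar k (oside d a1 b1 b2))"
      unfolding connects_def using op2 by blast
    then show ?thesis unfolding crosses_def connects_in_def by (rule connects_sym)
  qed
qed

lemma crosses_transversal_of_open_path:
  fixes s t :: int
  assumes op: "open_path (\<omega> \<inter> slab_edges k U) ys"
    and inside: "\<forall>v\<in>set ys. in_slab k v \<and> a \<le> along d v \<and> along d v \<le> a + N"
    and vl: "vl \<in> set ys" "across d vl \<le> s" and vh: "vh \<in> set ys" "t \<le> across d vh" and "s \<le> t"
  shows "crosses k (\<not> d) s t a (a+N) \<omega>"
proof -
  obtain pl ph where pl: "pl < length ys" "ys ! pl = vl" and ph: "ph < length ys" "ys ! ph = vh"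
    using vl(1) vh(1) by (metis in_set_conv_nth)
  have g2: "\<bar>across d u - across d v\<bar> \<le> 1" if "adj k u v" for u v using adj_along_across[OF that] by simp
  obtain zs where zs: "open_path (\<omega> \<inter> slab_edges k U) zs" "set zs \<subseteq> set ys"
      "(across d (hd zs) = s \<and> across d (last zs) = t) \<or> (across d (hd zs) = t \<and> across d (last zs) = s)"
      "\<forall>v\<in>set zs. s \<le> across d v \<and> across d v \<le> t"
    using open_path_level_crossing[where g = "across d", OF op g2 pl(1) ph(1)] pl ph vl vh \<open>s \<le> t\<close> by blast
  show ?thesis
    by (rule crosses_of_open_path[OF zs(1)]) (use zs inside in \<open>auto simp: along_across_Not\<close>)
qed

text \<open>A crossing of the strip \<open>orect d a (a+N) b (b + K N)\<close> crosses, for some \<open>i\<close>, the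
  \<open>N \<times> 2N\<close> block \<open>[b + i N, b + (i+2) N]\<close> in direction \<open>d\<close> or the \<open>N \<times> N\<close> square
  \<open>[b + i N, b + (i+1) N]\<close> transversally.\<close>

definition strip_event :: "nat \<Rightarrow> bool \<Rightarrow> int \<Rightarrow> int \<Rightarrow> int \<Rightarrow> nat \<Rightarrow> vtx set set \<Rightarrow> bool" where
  "strip_event k d a N b K \<omega> = ((\<exists>i<K-1. crosses k d a (a+N) (b + int i * N) (b + int (i+2) * N) \<omega>) \<or>
         (\<exists>i<K. crosses k (\<not> d) (b + int i * N) (b + int (i+1) * N) a (a+N) \<omega>))"

lemma strip_event_of_slab_crossing:
  fixes a b N :: int and K :: nat
  assumes op: "open_path (\<omega> \<inter> slab_edges k U) ys"
    and N: "1 \<le> N" and K: "2 \<le> K"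
    and ends: "(along d (hd ys) = a \<and> along d (last ys) = a + N) \<or> (along d (hd ys) = a + N \<and> along d (last ys) = a)"
    and inside: "\<forall>v\<in>set ys. in_slab k v \<and> a \<le> along d v \<and> along d v \<le> a + N \<and>
                             b \<le> across d v \<and> across d v \<le> b + int K * N"
  shows "strip_event k d a N b K \<omega>"
proof -
  have "ys \<noteq> []" using op open_path_def by blast
  then have fin: "finite (across d ` set ys)" and ne: "across d ` set ys \<noteq> {}" by auto
  define lo where "lo = Min (across d ` set ys)"
  define hi where "hi = Max (across d ` set ys)"
  have lo_hi: "lo \<le> across d v" "across d v \<le> hi" if "v \<in> set ys" for v
    unfolding lo_def hi_def using fin that by auto
  obtain vl vh where vl: "vl \<in> set ys" "across d vl = lo" and vh: "vh \<in> set ys" "across d vh = hi"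
    using Min_in[OF fin ne] Max_in[OF fin ne] unfolding lo_def hi_def by auto
  have "b \<le> lo" "hi \<le> b + int K * N" using vl vh inside by auto
  define i0 where "i0 = nat ((lo - b) div N)"
  have i0: "int i0 = (lo - b) div N" unfolding i0_def using \<open>b \<le> lo\<close> N by (simp add: pos_imp_zdiv_nonneg_iff)
  have "(lo - b) div N * N + (lo - b) mod N = lo - b" "0 \<le> (lo - b) mod N" "(lo - b) mod N < N"
    using N by simp_all
  then have i0_le: "int i0 * N \<le> lo - b" and i0_gt: "lo - b < (int i0 + 1) * N"
    unfolding i0 distrib_right mult_1 by linarith+
  define i where "i = min i0 (K - 2)"
  show ?thesis
  proof (cases "hi \<le> b + int (i + 2) * N")
    case True
    have "int i * N \<le> int i0 * N" unfolding i_def using N by (intro mult_right_mono) auto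
    then have "crosses k d a (a+N) (b + int i * N) (b + int (i+2) * N) \<omega>"
      using inside lo_hi i0_le True by (intro crosses_of_open_path[OF op _ ends]) force
    moreover have "i < K - 1" unfolding i_def using K by auto
    ultimately show ?thesis unfolding strip_event_def by blast
  next
    case False
    have "i = i0"
    proof (rule ccontr)
      assume "i \<noteq> i0"
      then have "int (i + 2) = int K" unfolding i_def using K by auto
      then show False using False \<open>hi \<le> b + int K * N\<close> by simp
    qed
    have "i0 + 2 < K"
    proof (rule ccontr)
      assume "\<not> i0 + 2 < K"
      then have "int K * N \<le> int (i0 + 2) * N" using N by (intro mult_right_mono) auto
      then show False using False \<open>i = i0\<close> \<open>hi \<le> b + int K * N\<close> by simp
    qed
    have "crosses k (\<not> d) (b + int (i0 + 1) * N) (b + int (i0 + 1 + 1) * N) a (a+N) \<omega>"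
    proof (rule crosses_transversal_of_open_path[OF op _ vl(1) _ vh(1)])
      show "across d vl \<le> b + int (i0 + 1) * N" using vl i0_gt by (simp add: algebra_simps)
      show "b + int (i0 + 1 + 1) * N \<le> across d vh" using vh False \<open>i = i0\<close> by simp
    qed (use inside N in auto)
    moreover have "i0 + 1 < K" using \<open>i0 + 2 < K\<close> by simp
    ultimately show ?thesis unfolding strip_event_def by blast
  qed
qed

lemma strip_event_of_open_path:
  fixes a b N :: int and K :: nat
  assumes op: "open_path (\<omega> \<inter> slab_edges k U) xs"
    and N: "1 \<le> N" and K: "2 \<le> K"
    and pq: "p < length xs" "q < length xs" "along d (xs ! p) \<le> a" "a + N \<le> along d (xs ! q)"
    and tv: "\<forall>v\<in>set xs. in_slab k v \<and> b \<le> across d v \<and> across d v \<le> b + int K * N"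
  shows "strip_event k d a N b K \<omega>"
proof -
  have g1: "\<bar>along d u - along d v\<bar> \<le> 1" if "adj k u v" for u v using adj_along_across[OF that] by simp
  obtain ys where ys: "open_path (\<omega> \<inter> slab_edges k U) ys" "set ys \<subseteq> set xs"
    "(along d (hd ys) = a \<and> along d (last ys) = a + N) \<or> (along d (hd ys) = a + N \<and> along d (last ys) = a)"
    "\<forall>v\<in>set ys. a \<le> along d v \<and> along d v \<le> a + N"
    using open_path_level_crossing[OF op g1 pq(1,2,3) _ pq(4)] N by auto
  show ?thesis
    by (rule strip_event_of_slab_crossing[OF ys(1) N K ys(3)]) (use ys(2,4) tv in blast)
qed

lemma orect_Not: "orect (\<not> d) a1 a2 b1 b2 = orect d b1 b2 a1 a2"
  unfolding orect_def by auto

lemma crosses_restrict: "orect d a1 a2 b1 b2 \<subseteq> T' \<Longrightarrow> crosses k d a1 a2 b1 b2 (\<omega> \<inter> bar_edges k T') = crosses k d a1 a2 b1 b2 \<omega>"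
  unfolding crosses_def by (rule connects_in_restrict)

lemma orect_block_subset_strip:
  fixes N :: int
  assumes "0 \<le> N" "i + 2 \<le> K"
  shows "orect d a (a+N) (b + int i * N) (b + int (i+2) * N) \<subseteq> orect d a (a+N) b (b + int K * N)"
proof (rule orect_mono)
  have "int (i+2) * N \<le> int K * N" using assms by (intro mult_right_mono) auto
  then show "b + int (i+2) * N \<le> b + int K * N" by simp
qed (use assms in auto)

lemma orect_square_subset_strip:
  fixes N :: int
  assumes "0 \<le> N" "i + 1 \<le> K"
  shows "orect (\<not> d) (b + int i * N) (b + int (i+1) * N) a (a+N) \<subseteq> orect d a (a+N) b (b + int K * N)"
  unfolding orect_Not
proof (rule orect_mono)
  have "int (i+1) * N \<le> int K * N" using assms by (intro mult_right_mono) auto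
  then show "b + int (i+1) * N \<le> b + int K * N" by simp
qed (use assms in auto)

lemma strip_event_restrict:
  assumes "0 \<le> N"
  shows "strip_event k d a N b K (\<omega> \<inter> bar_edges k (orect d a (a+N) b (b + int K * N))) = strip_event k d a N b K \<omega>"
  unfolding strip_event_def
  using crosses_restrict[OF orect_block_subset_strip[OF assms]] crosses_restrict[OF orect_square_subset_strip[OF assms]]
  by auto

lemma perc_prob_crosses_le:
  assumes "0 \<le> p" "p \<le> 1" "0 \<le> h" "h \<le> 2 * N" "finite F" "bar_edges k (orect d a1 a2 b1 b2) \<subseteq> F"
    "a2 = a1 + N" "b2 = b1 + h"
  shows "perc_prob p F (crosses k d a1 a2 b1 b2) \<le> f_easy k p N"
  using crossing_prob_orect_le_f_easy[OF assms(1-4)] assms(6-8)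
  unfolding crosses_def perc_prob_connects_in[OF assms(5,6)] by simp

lemma f_easy_nonneg: "0 \<le> p \<Longrightarrow> p \<le> 1 \<Longrightarrow> 0 \<le> f_easy k p N"
  unfolding f_easy_def f_cross_def by (rule perc_prob_nonneg)

lemma perc_prob_strip_event_le:
  assumes p: "0 \<le> p" "p \<le> 1" and N: "1 \<le> N" and F: "finite F"
    and sub: "bar_edges k (orect d a (a+N) b (b + int K * N)) \<subseteq> F"
  shows "perc_prob p F (strip_event k d a N b K) \<le> real (2 * K) * f_easy k p N"
proof -
  let ?A = "\<lambda>i. crosses k d a (a+N) (b + int i * N) (b + int (i+2) * N)"
  let ?B = "\<lambda>i. crosses k (\<not> d) (b + int i * N) (b + int (i+1) * N) a (a+N)"
  have "perc_prob p F (strip_event k d a N b K) = perc_prob p F (\<lambda>\<omega>. (\<exists>i\<in>{..<K-1}. ?A i \<omega>) \<or> (\<exists>i\<in>{..<K}. ?B i \<omega>))"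
    by (rule arg_cong[of _ _ "perc_prob p F"]) (auto simp: strip_event_def fun_eq_iff)
  also have "\<dots> \<le> (\<Sum>i\<in>{..<K-1}. perc_prob p F (?A i)) + (\<Sum>i\<in>{..<K}. perc_prob p F (?B i))"
    by (intro order.trans[OF perc_prob_disj_le[OF F p]] add_mono perc_prob_Bex_le p F) auto
  also have "\<dots> \<le> (\<Sum>i\<in>{..<K-1}. f_easy k p N) + (\<Sum>i\<in>{..<K}. f_easy k p N)"
  proof (intro add_mono sum_mono)
    fix i assume "i \<in> {..<K-1}"
    then have "i + 2 \<le> K" by auto
    then have "bar_edges k (orect d a (a+N) (b + int i * N) (b + int (i+2) * N)) \<subseteq> F"
      using sub bar_edges_mono[OF orect_block_subset_strip] N by (meson order.trans zero_le_one order.trans[of 0 1 N])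
    then show "perc_prob p F (?A i) \<le> f_easy k p N"
      by (intro perc_prob_crosses_le[OF p _ _ F]) (use N in \<open>auto simp: algebra_simps\<close>)
  next
    fix i assume "i \<in> {..<K}"
    then have "i + 1 \<le> K" by auto
    then have "bar_edges k (orect (\<not> d) (b + int i * N) (b + int (i+1) * N) a (a+N)) \<subseteq> F"
      using sub bar_edges_mono[OF orect_square_subset_strip] N by (meson order.trans zero_le_one order.trans[of 0 1 N])
    then show "perc_prob p F (?B i) \<le> f_easy k p N"
      by (intro perc_prob_crosses_le[OF p _ _ F]) (use N in \<open>auto simp: algebra_simps\<close>)
  qed
  also have "\<dots> \<le> real (2 * K) * f_easy k p N"
    using mult_right_mono[of "real (K - 1) + real K" "real (2 * K)", OF _ f_easy_nonneg[OF p]]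
    by (simp add: algebra_simps)
  finally show ?thesis .
qed

section \<open>Renormalisation of the crossing probability\<close>

lemma strip_event_of_crossing:
  fixes L N :: int and K :: nat
  assumes N: "1 \<le> N" and K: "2 \<le> K" and a: "0 \<le> a" "a + N \<le> L"
    and sub: "\<omega> \<subseteq> bar_edges k ({0..L} \<times> {0..int K * N})"
    and cr: "connects \<omega> (bar k ({0} \<times> {0..int K * N})) (bar k ({L} \<times> {0..int K * N}))"
  shows "strip_event k True a N 0 K \<omega>"
proof -
  let ?T = "{0..L} \<times> {0..int K * N}"
  obtain xs where xs: "open_path \<omega> xs" "hd xs \<in> bar k ({0} \<times> {0..int K * N})"
      "last xs \<in> bar k ({L} \<times> {0..int K * N})"
    using cr unfolding connects_def by blast
  have ne: "xs \<noteq> []" using xs(1) open_path_def by blast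
  have op: "open_path (\<omega> \<inter> slab_edges k (bar k ?T)) xs"
    using xs(1) sub unfolding bar_edges_def by (simp add: Int_absorb2)
  have "{0} \<times> {0..int K * N} \<subseteq> ?T" using a N by auto
  then have "hd xs \<in> bar k ?T" using xs(2) bar_mono by blast
  then have "\<forall>v\<in>set xs. v \<in> bar k ?T" by (rule open_path_stays_in[OF op])
  then have tv: "\<forall>v\<in>set xs. in_slab k v \<and> 0 \<le> across True v \<and> across True v \<le> 0 + int K * N"
    by (auto simp: bar_def across_def in_slab_def)
  have "along True (xs ! 0) \<le> a" "a + N \<le> along True (xs ! (length xs - 1))"
    using xs(2,3) ne a by (auto simp: hd_conv_nth last_conv_nth bar_def along_def)
  moreover have "0 < length xs" "length xs - 1 < length xs" using ne by auto
  ultimately show ?thesis using strip_event_of_open_path[OF op N K _ _ _ _ tv] by blast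
qed

lemma f_easy_renormalise:
  assumes p: "0 \<le> p" "p \<le> 1" and N: "1 \<le> N"
  shows "f_easy k p (3 * N) \<le> 144 * (f_easy k p N)^2"
proof -
  define F where "F = bar_edges k ({0..3*N} \<times> {0..int 6 * N})"
  define E1 where "E1 = bar_edges k (orect True 0 (0+N) 0 (0 + int 6 * N))"
  define E2 where "E2 = bar_edges k (orect True (2*N) (2*N+N) 0 (0 + int 6 * N))"
  define SL where "SL = strip_event k True 0 N 0 6"
  define SR where "SR = strip_event k True (2*N) N 0 6"
  have finF: "finite F" unfolding F_def by (intro finite_bar_edges) simp
  have finE: "finite E1" "finite E2" unfolding E1_def E2_def by (auto intro: finite_bar_edges finite_orect)
  have sub: "E1 \<subseteq> F" "E2 \<subseteq> F" unfolding E1_def E2_def F_def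
    by (intro bar_edges_mono; use N in \<open>auto simp: orect_def\<close>)+
  have disj: "E1 \<inter> E2 = {}" unfolding E1_def E2_def bar_edges_def
    by (rule slab_edges_disjoint) (use N in \<open>auto simp: mem_bar_orect\<close>)
  have loc: "SL (\<omega> \<inter> E1) = SL \<omega>" "SR (\<omega> \<inter> E2) = SR \<omega>" for \<omega>
    unfolding SL_def SR_def E1_def E2_def
    using strip_event_restrict[of N k True 0 0 6 \<omega>] strip_event_restrict[of N k True "2*N" 0 6 \<omega>] N
    by simp_all
  have "f_easy k p (3 * N) = perc_prob p F (\<lambda>\<omega>. connects \<omega> (bar k ({0} \<times> {0..int 6 * N})) (bar k ({3*N} \<times> {0..int 6 * N})))"
    unfolding f_easy_eq_crossing_prob crossing_prob_def F_def by simp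
  also have "\<dots> \<le> perc_prob p F (\<lambda>\<omega>. SL \<omega> \<and> SR \<omega>)"
  proof (rule perc_prob_mono[OF finF p], rule conjI)
    fix \<omega> assume "\<omega> \<subseteq> F" and "connects \<omega> (bar k ({0} \<times> {0..int 6 * N})) (bar k ({3*N} \<times> {0..int 6 * N}))"
    then show "SL \<omega>" "SR \<omega>" unfolding SL_def SR_def F_def
      using strip_event_of_crossing[OF N, where K = 6 and L = "3*N" and a = 0]
        strip_event_of_crossing[OF N, where K = 6 and L = "3*N" and a = "2*N"] N by simp_all
  qed
  also have "\<dots> = perc_prob p E1 SL * perc_prob p E2 SR"
    by (rule perc_prob_indep[where A = SL and B = SR, OF finF sub disj loc])
  also have "\<dots> \<le> (real (2 * 6) * f_easy k p N) * (real (2 * 6) * f_easy k p N)"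
  proof (rule mult_mono)
    show "perc_prob p E1 SL \<le> real (2 * 6) * f_easy k p N" unfolding SL_def
      by (rule perc_prob_strip_event_le[OF p N finE(1)]) (simp add: E1_def)
    show "perc_prob p E2 SR \<le> real (2 * 6) * f_easy k p N" unfolding SR_def
      by (rule perc_prob_strip_event_le[OF p N finE(2)]) (simp add: E2_def)
  qed (use f_easy_nonneg[OF p] perc_prob_nonneg[OF p] in auto)
  also have "\<dots> = 144 * (f_easy k p N)^2" by (simp add: power2_eq_square)
  finally show ?thesis .
qed

lemma f_easy_iterate:
  assumes p: "0 \<le> p" "p \<le> 1" and n: "1 \<le> n" and small: "144 * f_easy k p n \<le> 1/2"
  shows "144 * f_easy k p (3^j * n) \<le> (1/2) ^ (2^j)"
proof (induction j)
  case 0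
  then show ?case using small by simp
next
  case (Suc j)
  have N: "1 \<le> 3^j * n"
  proof -
    have "(1::int) \<le> 3^j" by simp
    then have "1 * 1 \<le> 3^j * n" using n by (intro mult_mono) auto
    then show ?thesis by simp
  qed
  have "144 * f_easy k p (3^Suc j * n) = 144 * f_easy k p (3 * (3^j * n))" by (simp add: mult.assoc)
  also have "\<dots> \<le> 144 * (144 * (f_easy k p (3^j * n))^2)" using f_easy_renormalise[OF p N] by simp
  also have "\<dots> = (144 * f_easy k p (3^j * n))^2" by (simp add: power2_eq_square)
  also have "\<dots> \<le> ((1/2) ^ (2^j))^2"
    using Suc.IH f_easy_nonneg[OF p] by (intro power_mono) auto
  also have "\<dots> = (1/2) ^ (2^Suc j)" by (simp add: power_mult[symmetric] mult.commute)
  finally show ?case .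
qed

section \<open>Exit probabilities from boxes\<close>

definition exit_prob :: "nat \<Rightarrow> real \<Rightarrow> int \<Rightarrow> int \<Rightarrow> real" where
  "exit_prob k p z m = perc_prob p (bar_edges k (box m)) (\<lambda>\<omega>. connects \<omega> {(0, 0, z)} (vboundary k (bar k (box m))))"

lemma conn_prob_eq_exit_prob: "conn_prob k p m = exit_prob k p 0 m"
  unfolding conn_prob_def exit_prob_def bar_edges_def ..

lemma finite_box: "finite (box m)"
  unfolding box_def by simp

lemma vboundary_box:
  assumes "v \<in> vboundary k (bar k (box m))"
  shows "v \<in> bar k (box m)" "\<bar>fst v\<bar> = m \<or> \<bar>fst (snd v)\<bar> = m"
proof -
  show vin: "v \<in> bar k (box m)" using assms unfolding vboundary_def by blast
  obtain u where u: "adj k v u" "u \<notin> bar k (box m)" using assms unfolding vboundary_def by blast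
  have "in_slab k u" using adj_along_across(4)[OF u(1)] .
  then have "\<not> (\<bar>fst u\<bar> \<le> m \<and> \<bar>fst (snd u)\<bar> \<le> m)" using u(2)
    by (cases u) (auto simp: mem_bar box_def in_slab_def abs_le_iff)
  moreover have "\<bar>fst v\<bar> \<le> m" "\<bar>fst (snd v)\<bar> \<le> m" using vin
    by (cases v, auto simp: mem_bar box_def abs_le_iff)+
  moreover have "\<bar>fst v - fst u\<bar> \<le> 1" "\<bar>fst (snd v) - fst (snd u)\<bar> \<le> 1" using adj_planar_coords[OF u(1)] by auto
  ultimately show "\<bar>fst v\<bar> = m \<or> \<bar>fst (snd v)\<bar> = m" by linarith
qed

lemma strip_event_of_exit:
  assumes N: "1 \<le> N" and z: "0 \<le> z" "z \<le> int k" and sub: "\<omega> \<subseteq> bar_edges k (box N)"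
    and cr: "connects \<omega> {(0, 0, z)} (vboundary k (bar k (box N)))"
  shows "\<exists>(d, a) \<in> UNIV \<times> {0, -N}. strip_event k d a N (-N) 2 \<omega>"
proof -
  obtain xs where xs: "open_path \<omega> xs" "hd xs = (0, 0, z)" "last xs \<in> vboundary k (bar k (box N))"
    using cr unfolding connects_def by blast
  have ne: "xs \<noteq> []" using xs(1) open_path_def by blast
  have op: "open_path (\<omega> \<inter> slab_edges k (bar k (box N))) xs"
    using xs(1) sub unfolding bar_edges_def by (simp add: Int_absorb2)
  have "hd xs \<in> bar k (box N)" using xs(2) N z by (simp add: mem_bar box_def)
  then have "\<forall>v\<in>set xs. v \<in> bar k (box N)" by (rule open_path_stays_in[OF op])
  then have tv: "\<forall>v\<in>set xs. in_slab k v \<and> -N \<le> across d v \<and> across d v \<le> -N + int 2 * N" for d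
    by (auto simp: bar_def across_def in_slab_def box_def)
  have p0: "0 < length xs" "along d (xs ! 0) = 0" for d
    using ne xs(2) by (auto simp: hd_conv_nth along_def)
  have pl: "length xs - 1 < length xs" "xs ! (length xs - 1) = last xs" using ne by (auto simp: last_conv_nth)
  obtain d where d: "\<bar>along d (last xs)\<bar> = N"
    using vboundary_box(2)[OF xs(3)] unfolding along_def by (metis (full_types))
  show ?thesis
  proof (cases "along d (last xs) = N")
    case True
    then have "strip_event k d 0 N (-N) 2 \<omega>"
      by (intro strip_event_of_open_path[OF op N _ p0(1) pl(1) _ _ tv]) (use p0 pl in auto)
    then show ?thesis by blast
  next
    case False
    then have "along d (last xs) = -N" using d by auto
    then have "strip_event k d (-N) N (-N) 2 \<omega>"
      by (intro strip_event_of_open_path[OF op N _ pl(1) p0(1) _ _ tv]) (use p0 pl in auto)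
    then show ?thesis by blast
  qed
qed

lemma exit_prob_le_f_easy:
  assumes p: "0 \<le> p" "p \<le> 1" and N: "1 \<le> N" and z: "0 \<le> z" "z \<le> int k"
  shows "exit_prob k p z N \<le> 16 * f_easy k p N"
proof -
  define F where "F = bar_edges k (box N)"
  define I where "I = (UNIV :: bool set) \<times> {0, -N}"
  have finF: "finite F" unfolding F_def box_def by (intro finite_bar_edges) simp
  have card_I: "card I = 4" unfolding I_def using N by (simp add: card_cartesian_product)
  have "exit_prob k p z N \<le> perc_prob p F (\<lambda>\<omega>. \<exists>(d, a) \<in> I. strip_event k d a N (-N) 2 \<omega>)"
    unfolding exit_prob_def F_def I_def
    by (rule perc_prob_mono) (use strip_event_of_exit[OF N z] p in \<open>auto simp: box_def intro: finite_bar_edges\<close>)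
  also have "\<dots> \<le> (\<Sum>(d, a)\<in>I. perc_prob p F (strip_event k d a N (-N) 2))"
    using perc_prob_Bex_le[OF p _ finF, of I "\<lambda>(d, a). strip_event k d a N (-N) 2"]
    by (simp add: I_def case_prod_unfold)
  also have "\<dots> \<le> (\<Sum>(d, a)\<in>I. real (2 * 2) * f_easy k p N)"
  proof (rule sum_mono, clarify)
    fix d a assume "(d, a) \<in> I"
    then have "orect d a (a + N) (-N) (-N + int 2 * N) \<subseteq> box N"
      using N unfolding I_def orect_def box_def by auto
    then show "perc_prob p F (strip_event k d a N (-N) 2) \<le> real (2 * 2) * f_easy k p N"
      by (intro perc_prob_strip_event_le[OF p N finF]) (simp add: F_def bar_edges_mono)
  qed
  also have "\<dots> = 16 * f_easy k p N" using card_I by simp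
  finally show ?thesis .
qed

section \<open>The Simon-Lieb inequality\<close>

definition cluster :: "vtx set set \<Rightarrow> vtx \<Rightarrow> vtx set" where
  "cluster \<eta> a = {v. connects \<eta> {a} {v}}"

definition edges_meeting :: "vtx set \<Rightarrow> vtx set set" where
  "edges_meeting A = {e. e \<inter> A \<noteq> {}}"

lemma mem_cluster_self: "a \<in> cluster \<eta> a"
  unfolding cluster_def using connects_refl by blast

lemma cluster_mono: "\<eta> \<subseteq> \<eta>' \<Longrightarrow> cluster \<eta> a \<subseteq> cluster \<eta>' a"
  unfolding cluster_def using connects_mono by blast

lemma cluster_subset_closed:
  assumes "a \<in> A" "\<And>u v. u \<in> A \<Longrightarrow> {u, v} \<in> \<eta> \<Longrightarrow> v \<in> A"
  shows "cluster \<eta> a \<subseteq> A"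
proof
  fix v assume "v \<in> cluster \<eta> a"
  then obtain xs where xs: "open_path \<eta> xs" "hd xs = a" "last xs = v"
    unfolding cluster_def connects_def by blast
  have "set xs \<subseteq> A" by (rule open_path_subset_closed[OF xs(1)]) (use xs(2) assms in auto)
  moreover have "xs \<noteq> []" using xs(1) by (simp add: open_path_def)
  ultimately show "v \<in> A" using xs(3) by auto
qed

lemma cluster_subset_region: "a \<in> U \<Longrightarrow> cluster (\<omega> \<inter> slab_edges k U) a \<subseteq> U"
  by (rule cluster_subset_closed) (auto simp: slab_edges_iff)

lemma cluster_edges_meeting_iff:
  "cluster (\<eta> \<inter> edges_meeting A) a = A \<longleftrightarrow> cluster \<eta> a = A"
proof
  assume h: "cluster (\<eta> \<inter> edges_meeting A) a = A"
  have "cluster \<eta> a \<subseteq> A"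
  proof (rule cluster_subset_closed)
    show "a \<in> A" using h mem_cluster_self by blast
    fix u v assume "u \<in> A" "{u, v} \<in> \<eta>"
    then have "{u, v} \<in> \<eta> \<inter> edges_meeting A" by (auto simp: edges_meeting_def)
    then show "v \<in> A" using h \<open>u \<in> A\<close> connects_snoc unfolding cluster_def by blast
  qed
  then show "cluster \<eta> a = A" using h cluster_mono[of "\<eta> \<inter> edges_meeting A" \<eta>] by blast
next
  assume h: "cluster \<eta> a = A"
  have "cluster \<eta> a \<subseteq> cluster (\<eta> \<inter> edges_meeting A) a"
  proof
    fix v assume "v \<in> cluster \<eta> a"
    then obtain xs where xs: "open_path \<eta> xs" "hd xs = a" "last xs = v"
      unfolding cluster_def connects_def by blast
    have "open_path (\<eta> \<inter> edges_meeting A) xs"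
      unfolding open_path_def
    proof (intro conjI allI impI)
      show "xs \<noteq> []" using xs(1) open_path_def by blast
      fix i assume i: "Suc i < length xs"
      have "xs ! i \<in> A" using connects_hd_nth[OF xs(1,2), of i] i h unfolding cluster_def by auto
      then show "{xs ! i, xs ! Suc i} \<in> \<eta> \<inter> edges_meeting A"
        using open_pathD[OF xs(1) i] unfolding edges_meeting_def by auto
    qed
    then show "v \<in> cluster (\<eta> \<inter> edges_meeting A) a" unfolding cluster_def connects_def using xs by blast
  qed
  then show "cluster (\<eta> \<inter> edges_meeting A) a = A" using h cluster_mono[of "\<eta> \<inter> edges_meeting A" \<eta>] by blast
qed

lemma last_index_in:
  assumes "xs ! 0 \<in> A" "last xs \<notin> A" "xs \<noteq> []"
  shows "\<exists>j. Suc j < length xs \<and> xs ! j \<in> A \<and> (\<forall>l. j < l \<and> l < length xs \<longrightarrow> xs ! l \<notin> A)"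
proof -
  define I where "I = {i. i < length xs \<and> xs ! i \<in> A}"
  have fin: "finite I" and "0 \<in> I" unfolding I_def using assms by auto
  define j where "j = Max I"
  have "j \<in> I" unfolding j_def using fin \<open>0 \<in> I\<close> Max_in by blast
  moreover have "xs ! l \<notin> A" if "j < l" "l < length xs" for l
  proof
    assume "xs ! l \<in> A"
    then have "l \<in> I" unfolding I_def using that by simp
    then show False using Max_ge[OF fin] that unfolding j_def by force
  qed
  moreover have "j \<noteq> length xs - 1" using \<open>j \<in> I\<close> assms(2,3) unfolding I_def by (auto simp: last_conv_nth)
  ultimately show ?thesis unfolding I_def by (intro exI[of _ j]) auto
qed

text \<open>A path from \<open>s\<close> to \<open>\<partial>B\<^sub>M\<^sub>+\<^sub>L\<close> leaves the cluster \<open>C\<close> of \<open>s\<close> in \<open>B\<^sub>M\<close> for the last time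
  at some \<open>x \<in> \<partial>B\<^sub>M\<close>, through an edge outside \<open>B\<^sub>M\<close>; from there on it avoids the edges of \<open>B\<^sub>M\<close>
  that meet \<open>C\<close>, on which the event "the cluster is \<open>C\<close>" depends.\<close>

lemma last_exit_from_cluster:
  fixes M L :: int
  assumes L: "1 \<le> L" and s: "s \<in> bar k (box M)" and sub: "\<omega> \<subseteq> bar_edges k (box (M+L))"
    and cr: "connects \<omega> {s} (vboundary k (bar k (box (M+L))))"
  defines "C \<equiv> cluster (\<omega> \<inter> bar_edges k (box M)) s"
  shows "\<exists>x\<in>vboundary k (bar k (box M)). x \<in> C \<and>
    connects (\<omega> - bar_edges k (box M) \<inter> edges_meeting C) {x} (vboundary k (bar k (box (M+L))))"
proof -
  obtain xs where xs: "open_path \<omega> xs" "hd xs = s" "last xs \<in> vboundary k (bar k (box (M+L)))"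
    using cr unfolding connects_def by blast
  have ne: "xs \<noteq> []" using xs(1) open_path_def by blast
  have C_sub: "C \<subseteq> bar k (box M)"
    unfolding C_def bar_edges_def by (rule cluster_subset_region[OF s])
  have "last xs \<notin> C"
  proof
    assume "last xs \<in> C"
    then have "last xs \<in> bar k (box M)" using C_sub by blast
    then show False using vboundary_box(2)[OF xs(3)] L by (cases "last xs") (auto simp: mem_bar box_def)
  qed
  moreover have "xs ! 0 \<in> C" using xs(2) ne mem_cluster_self unfolding C_def by (simp add: hd_conv_nth)
  ultimately obtain j where j: "Suc j < length xs" "xs ! j \<in> C"
    and after: "\<And>l. j < l \<Longrightarrow> l < length xs \<Longrightarrow> xs ! l \<notin> C"
    using last_index_in[OF _ _ ne] by blast
  define x y where "x = xs ! j" and "y = xs ! Suc j"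
  have e: "{x, y} \<in> \<omega>" unfolding x_def y_def using open_pathD[OF xs(1) j(1)] .
  then have adj: "adj k x y" using sub unfolding bar_edges_def by (auto simp: slab_edges_iff)
  have "x \<in> C" "y \<notin> C" using j after[of "Suc j"] unfolding x_def y_def by auto
  have eD: "{x, y} \<notin> bar_edges k (box M)"
  proof
    assume "{x, y} \<in> bar_edges k (box M)"
    then have "y \<in> C" using \<open>x \<in> C\<close> e connects_snoc unfolding C_def cluster_def by blast
    then show False using \<open>y \<notin> C\<close> by simp
  qed
  have "x \<in> bar k (box M)" using \<open>x \<in> C\<close> C_sub by blast
  then have "y \<notin> bar k (box M)" using eD adj by (auto simp: bar_edges_def slab_edges_iff)
  then have x_bd: "x \<in> vboundary k (bar k (box M))"
    unfolding vboundary_def using \<open>x \<in> bar k (box M)\<close> adj by blast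
  let ?tail = "path_segment xs j (length xs - 1)"
  have "open_path (\<omega> - bar_edges k (box M) \<inter> edges_meeting C) ?tail"
  proof (rule open_path_segmentI)
    fix l assume l: "j \<le> l" "l < length xs - 1"
    have "{xs ! l, xs ! Suc l} \<notin> bar_edges k (box M) \<inter> edges_meeting C"
      using eD after[of l] after[of "Suc l"] l unfolding x_def y_def edges_meeting_def
      by (cases "l = j") auto
    then show "{xs ! l, xs ! Suc l} \<in> \<omega> - bar_edges k (box M) \<inter> edges_meeting C"
      using open_pathD[OF xs(1)] l by simp
  qed (use j in auto)
  moreover have "hd ?tail = x" "last ?tail = last xs"
    using hd_path_segment last_path_segment[of j "length xs - 1"] j ne unfolding x_def
    by (auto simp: last_conv_nth)
  ultimately have "connects (\<omega> - bar_edges k (box M) \<inter> edges_meeting C) {x} (vboundary k (bar k (box (M+L))))"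
    unfolding connects_def using xs(3) by (intro exI[of _ ?tail]) simp
  then show ?thesis using x_bd \<open>x \<in> C\<close> by blast
qed

text \<open>The event that the cluster of \<open>s\<close> is \<open>A\<close> lives on the edges of \<open>D\<close> meeting \<open>A\<close>; the
  continuation from \<open>x\<close> uses only the remaining edges, hence the two are independent.\<close>

lemma perc_prob_cluster_then_connects_le:
  assumes p: "0 \<le> p" "p \<le> 1" and finF: "finite F" and DF: "D \<subseteq> F"
  shows "perc_prob p F (\<lambda>\<omega>. x \<in> A \<and> cluster (\<omega> \<inter> D) s = A \<and>
                               connects (\<omega> \<inter> (F - D \<inter> edges_meeting A)) {x} V)
    \<le> perc_prob p D (\<lambda>\<omega>. cluster (\<omega> \<inter> D) s = A \<and> x \<in> A) * perc_prob p F (\<lambda>\<omega>. connects \<omega> {x} V)"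
proof -
  define E where "E = D \<inter> edges_meeting A"
  define Cl where "Cl = (\<lambda>\<omega>. cluster (\<omega> \<inter> D) s)"
  define R where "R = (\<lambda>\<omega>. connects (\<omega> \<inter> (F - E)) {x} V)"
  have finD: "finite D" using finF DF finite_subset by blast
  have E: "E \<subseteq> D" "E \<subseteq> F" using DF unfolding E_def by auto
  have loc: "Cl (\<omega> \<inter> E) = A \<longleftrightarrow> Cl \<omega> = A" for \<omega>
  proof -
    have "\<omega> \<inter> E \<inter> D = \<omega> \<inter> D \<inter> edges_meeting A" unfolding E_def by blast
    then show ?thesis unfolding Cl_def by (simp add: cluster_edges_meeting_iff)
  qed
  have locR: "R (\<omega> \<inter> (F - E)) = R \<omega>" for \<omega> unfolding R_def by (simp add: Int_assoc)
  have "perc_prob p F (\<lambda>\<omega>. x \<in> A \<and> cluster (\<omega> \<inter> D) s = A \<and> connects (\<omega> \<inter> (F - D \<inter> edges_meeting A)) {x} V)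
      = perc_prob p F (\<lambda>\<omega>. (x \<in> A \<and> Cl \<omega> = A) \<and> R \<omega>)"
    unfolding Cl_def R_def E_def by (simp add: conj_assoc)
  also have "\<dots> = perc_prob p E (\<lambda>\<omega>. x \<in> A \<and> Cl \<omega> = A) * perc_prob p (F - E) R"
    by (rule perc_prob_indep[where A = "\<lambda>\<omega>. x \<in> A \<and> Cl \<omega> = A" and B = R, OF finF E(2) _ _ _ locR])
      (use loc in auto)
  also have "perc_prob p E (\<lambda>\<omega>. x \<in> A \<and> Cl \<omega> = A) = perc_prob p D (\<lambda>\<omega>. Cl \<omega> = A \<and> x \<in> A)"
  proof -
    have "(\<lambda>\<omega>. x \<in> A \<and> Cl (\<omega> \<inter> E) = A) = (\<lambda>\<omega>. Cl \<omega> = A \<and> x \<in> A)"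
      using loc by (intro ext) blast
    then show ?thesis using perc_prob_restrict[OF finD E(1), of p "\<lambda>\<omega>. x \<in> A \<and> Cl \<omega> = A"] by simp
  qed
  also have "perc_prob p (F - E) R = perc_prob p F R"
    using perc_prob_restrict[OF finF, of "F - E" p R] locR by simp
  also have "\<dots> \<le> perc_prob p F (\<lambda>\<omega>. connects \<omega> {x} V)"
    by (rule perc_prob_mono[OF finF p]) (unfold R_def, erule connects_mono, auto)
  finally show ?thesis unfolding Cl_def using perc_prob_nonneg[OF p] by (simp add: mult_left_mono)
qed

lemma exit_prob_simon_lieb:
  fixes M L z :: int
  assumes p: "0 \<le> p" "p \<le> 1" and M: "1 \<le> M" and L: "1 \<le> L" and z: "0 \<le> z" "z \<le> int k"
    and g0: "0 \<le> g"
    and g: "\<And>x. x \<in> vboundary k (bar k (box M)) \<Longrightarrow>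
      perc_prob p (bar_edges k (box (M+L))) (\<lambda>\<omega>. connects \<omega> {x} (vboundary k (bar k (box (M+L))))) \<le> g"
  shows "exit_prob k p z (M+L) \<le> real (card (vboundary k (bar k (box M)))) * exit_prob k p z M * g"
proof -
  define D where "D = bar_edges k (box M)"
  define F where "F = bar_edges k (box (M+L))"
  define og where "og = ((0::int), (0::int), z)"
  define V where "V = vboundary k (bar k (box (M+L)))"
  define Bd where "Bd = vboundary k (bar k (box M))"
  define Cl where "Cl = (\<lambda>\<omega>. cluster (\<omega> \<inter> D) og)"
  define AA where "AA = Pow (bar k (box M))"
  define Ev where "Ev = (\<lambda>A x \<omega>. x \<in> A \<and> Cl \<omega> = A \<and> connects (\<omega> \<inter> (F - D \<inter> edges_meeting A)) {x} V)"
  have finD: "finite D" unfolding D_def by (intro finite_bar_edges finite_box)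
  have finF: "finite F" unfolding F_def by (intro finite_bar_edges finite_box)
  have finB: "finite (bar k (box M))" by (intro finite_bar finite_box)
  have finAA: "finite AA" unfolding AA_def using finB by simp
  have finBd: "finite Bd" unfolding Bd_def vboundary_def using finB by (auto intro: finite_subset)
  have DF: "D \<subseteq> F" unfolding D_def F_def by (rule bar_edges_mono) (use L in \<open>auto simp: box_def\<close>)
  have ogB: "og \<in> bar k (box M)" unfolding og_def using M z by (simp add: mem_bar box_def)
  have dec: "\<exists>A\<in>AA. \<exists>x\<in>Bd. Ev A x \<omega>" if sub: "\<omega> \<subseteq> F" and cr: "connects \<omega> {og} V" for \<omega>
  proof -
    have "Cl \<omega> \<in> AA" unfolding Cl_def AA_def D_def bar_edges_def using cluster_subset_region[OF ogB] by blast
    moreover obtain x where "x \<in> Bd" "x \<in> Cl \<omega>" "connects (\<omega> - D \<inter> edges_meeting (Cl \<omega>)) {x} V"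
      using last_exit_from_cluster[OF L ogB sub[unfolded F_def] cr[unfolded V_def]]
      unfolding Cl_def D_def V_def Bd_def by blast
    moreover have "\<omega> - D \<inter> edges_meeting (Cl \<omega>) = \<omega> \<inter> (F - D \<inter> edges_meeting (Cl \<omega>))"
      using sub by blast
    ultimately show ?thesis unfolding Ev_def by (intro bexI[of _ "Cl \<omega>"] bexI[of _ x] conjI) simp_all
  qed
  have single: "perc_prob p F (Ev A x) \<le> perc_prob p D (\<lambda>\<omega>. Cl \<omega> = A \<and> x \<in> A) * g"
    if x: "x \<in> Bd" for A x
  proof -
    have "perc_prob p F (Ev A x)
        \<le> perc_prob p D (\<lambda>\<omega>. Cl \<omega> = A \<and> x \<in> A) * perc_prob p F (\<lambda>\<omega>. connects \<omega> {x} V)"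
      unfolding Ev_def Cl_def by (rule perc_prob_cluster_then_connects_le[OF p finF DF])
    also have "\<dots> \<le> perc_prob p D (\<lambda>\<omega>. Cl \<omega> = A \<and> x \<in> A) * g"
      using g x perc_prob_nonneg[OF p] unfolding F_def V_def Bd_def by (simp add: mult_left_mono)
    finally show ?thesis .
  qed
  have "exit_prob k p z (M+L) = perc_prob p F (\<lambda>\<omega>. connects \<omega> {og} V)"
    unfolding exit_prob_def F_def og_def V_def ..
  also have "\<dots> \<le> perc_prob p F (\<lambda>\<omega>. \<exists>A\<in>AA. \<exists>x\<in>Bd. Ev A x \<omega>)"
    by (rule perc_prob_mono[OF finF p]) (rule dec)
  also have "\<dots> \<le> (\<Sum>A\<in>AA. \<Sum>x\<in>Bd. perc_prob p F (Ev A x))"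
    by (intro order.trans[OF perc_prob_Bex_le[OF p finAA finF]] sum_mono perc_prob_Bex_le[OF p finBd finF])
  also have "\<dots> \<le> (\<Sum>A\<in>AA. \<Sum>x\<in>Bd. perc_prob p D (\<lambda>\<omega>. Cl \<omega> = A \<and> x \<in> A) * g)"
    by (intro sum_mono single)
  also have "\<dots> = (\<Sum>x\<in>Bd. (\<Sum>A\<in>AA. perc_prob p D (\<lambda>\<omega>. Cl \<omega> = A \<and> x \<in> A)) * g)"
    by (subst sum.swap) (simp add: sum_distrib_right)
  also have "\<dots> = (\<Sum>x\<in>Bd. perc_prob p D (\<lambda>\<omega>. Cl \<omega> \<in> AA \<and> x \<in> Cl \<omega>) * g)"
    using sum_perc_prob_partition[OF finD finAA, of p Cl "\<lambda>A \<omega>. _ \<in> A"] by simp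
  also have "\<dots> \<le> (\<Sum>x\<in>Bd. exit_prob k p z M * g)"
  proof (intro sum_mono mult_right_mono g0)
    fix x assume x: "x \<in> Bd"
    have "perc_prob p D (\<lambda>\<omega>. Cl \<omega> \<in> AA \<and> x \<in> Cl \<omega>) \<le> perc_prob p D (\<lambda>\<omega>. connects \<omega> {og} Bd)"
    proof (rule perc_prob_mono[OF finD p])
      fix \<omega> assume "Cl \<omega> \<in> AA \<and> x \<in> Cl \<omega>"
      then have "connects (\<omega> \<inter> D) {og} {x}" unfolding Cl_def cluster_def by blast
      then show "connects \<omega> {og} Bd" by (rule connects_mono) (use x in auto)
    qed
    then show "perc_prob p D (\<lambda>\<omega>. Cl \<omega> \<in> AA \<and> x \<in> Cl \<omega>) \<le> exit_prob k p z M"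
      unfolding exit_prob_def D_def og_def Bd_def .
  qed
  also have "\<dots> = real (card (vboundary k (bar k (box M)))) * exit_prob k p z M * g"
    unfolding Bd_def by simp
  finally show ?thesis .
qed

lemma vboundary_image:
  assumes "bij \<psi>" "\<And>u v. adj k (\<psi> u) (\<psi> v) = adj k u v"
  shows "vboundary k (\<psi> ` U) = \<psi> ` vboundary k U"
proof
  show "vboundary k (\<psi> ` U) \<subseteq> \<psi> ` vboundary k U"
  proof
    fix v assume v: "v \<in> vboundary k (\<psi> ` U)"
    then obtain u where u: "u \<in> U" "v = \<psi> u" unfolding vboundary_def by blast
    obtain w where w: "adj k v w" "w \<notin> \<psi> ` U" using v unfolding vboundary_def by blast
    obtain w' where w': "w = \<psi> w'" using assms(1) by (metis bij_pointE)
    have "adj k u w'" using w(1) u(2) w' assms(2) by simp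
    moreover have "w' \<notin> U" using w(2) w' by blast
    ultimately have "u \<in> vboundary k U" unfolding vboundary_def using u(1) by blast
    then show "v \<in> \<psi> ` vboundary k U" using u(2) by blast
  qed
  show "\<psi> ` vboundary k U \<subseteq> vboundary k (\<psi> ` U)"
  proof
    fix v assume "v \<in> \<psi> ` vboundary k U"
    then obtain u w where u: "v = \<psi> u" "u \<in> U" "adj k u w" "w \<notin> U" unfolding vboundary_def by blast
    have "adj k v (\<psi> w)" using u assms(2) by simp
    moreover have "\<psi> w \<notin> \<psi> ` U" using u(4) assms(1) by (simp add: bij_is_inj inj_image_mem_iff)
    ultimately show "v \<in> vboundary k (\<psi> ` U)" unfolding vboundary_def using u by blast
  qed
qed

lemma exit_prob_translate:
  fixes x1 y1 :: int
  shows "perc_prob p (bar_edges k ({x1 - L..x1 + L} \<times> {y1 - L..y1 + L}))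
     (\<lambda>\<omega>. connects \<omega> {(x1, y1, zx)} (vboundary k (bar k ({x1 - L..x1 + L} \<times> {y1 - L..y1 + L})))) = exit_prob k p zx L"
proof -
  define \<psi> where "\<psi> = lift_planar (translate x1 y1)"
  have b: "bij \<psi>" unfolding \<psi>_def by (rule bij_lift_planar[OF bij_translate])
  have a: "adj k (\<psi> u) (\<psi> v) = adj k u v" for u v
    unfolding \<psi>_def by (rule adj_lift_planar) (simp add: translate_def)
  have S: "translate x1 y1 ` box L = {x1 - L..x1 + L} \<times> {y1 - L..y1 + L}"
    unfolding box_def translate_rect by (simp add: algebra_simps)
  have bS: "bar k ({x1 - L..x1 + L} \<times> {y1 - L..y1 + L}) = \<psi> ` bar k (box L)"
    unfolding \<psi>_def lift_planar_bar S ..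
  have e: "bar_edges k ({x1 - L..x1 + L} \<times> {y1 - L..y1 + L}) = edge_image \<psi> (bar_edges k (box L))"
    unfolding bar_edges_def bS by (rule slab_edges_image[OF b a])
  have o: "{(x1, y1, zx)} = \<psi> ` {(0, 0, zx)}" unfolding \<psi>_def lift_planar_def translate_def by simp
  have vb: "vboundary k (bar k ({x1 - L..x1 + L} \<times> {y1 - L..y1 + L})) = \<psi> ` vboundary k (bar k (box L))"
    unfolding bS by (rule vboundary_image[OF b a])
  have fin: "finite (bar_edges k (box L))" by (intro finite_bar_edges finite_box)
  show ?thesis
    unfolding e o vb perc_prob_edge_image[OF bij_is_inj[OF b] fin] connects_edge_image[OF b] exit_prob_def ..
qed

lemma square_vboundaryI:
  fixes x1 y1 L a b c :: int
  assumes a: "\<bar>a - x1\<bar> \<le> L" and b: "\<bar>b - y1\<bar> \<le> L" and c: "0 \<le> c" "c \<le> int k"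
    and edge: "L \<le> \<bar>a - x1\<bar> \<or> L \<le> \<bar>b - y1\<bar>"
  shows "(a, b, c) \<in> vboundary k (bar k ({x1 - L..x1 + L} \<times> {y1 - L..y1 + L}))"
proof -
  let ?S = "{x1 - L..x1 + L} \<times> {y1 - L..y1 + L}"
  obtain w where "adj k (a, b, c) w" "w \<notin> bar k ?S"
  proof (cases "L \<le> \<bar>a - x1\<bar>")
    case True
    show ?thesis
      by (rule that[of "(if x1 \<le> a then a + 1 else a - 1, b, c)"]) (use True a c in \<open>auto simp: adj_def in_slab_def mem_bar\<close>)
  next
    case False
    then have "L \<le> \<bar>b - y1\<bar>" using edge by simp
    then show ?thesis
      by (intro that[of "(a, if y1 \<le> b then b + 1 else b - 1, c)"]) (use b c in \<open>auto simp: adj_def in_slab_def mem_bar\<close>)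
  qed
  moreover have "(a, b, c) \<in> bar k ?S" using a b c by (auto simp: mem_bar abs_le_iff)
  ultimately show ?thesis unfolding vboundary_def by blast
qed

lemma connects_local_exit:
  fixes M L x1 y1 zx :: int
  assumes L: "1 \<le> L" and x: "(x1, y1, zx) \<in> bar k (box M)"
    and sub: "\<omega> \<subseteq> bar_edges k (box (M+L))"
    and cr: "connects \<omega> {(x1, y1, zx)} (vboundary k (bar k (box (M+L))))"
  shows "connects (\<omega> \<inter> bar_edges k ({x1 - L..x1 + L} \<times> {y1 - L..y1 + L})) {(x1, y1, zx)}
           (vboundary k (bar k ({x1 - L..x1 + L} \<times> {y1 - L..y1 + L})))"
proof -
  define S where "S = {x1 - L..x1 + L} \<times> {y1 - L..y1 + L}"
  define out where "out = (\<lambda>v::vtx. L \<le> \<bar>fst v - x1\<bar> \<or> L \<le> \<bar>fst (snd v) - y1\<bar>)"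
  obtain xs where xs: "open_path \<omega> xs" "hd xs = (x1, y1, zx)" "last xs \<in> vboundary k (bar k (box (M+L)))"
    using cr unfolding connects_def by blast
  have ne: "xs \<noteq> []" using xs(1) open_path_def by blast
  have ws: "\<omega> \<subseteq> slab_edges k (bar k (box (M+L)))" using sub unfolding bar_edges_def .
  have "out (xs ! (length xs - 1))"
    using vboundary_box(2)[OF xs(3)] x ne unfolding out_def by (auto simp: mem_bar box_def last_conv_nth)
  moreover have "length xs - 1 < length xs" using ne by simp
  ultimately obtain j where jP: "j < length xs" "out (xs ! j)" and before: "\<And>i. i < j \<Longrightarrow> \<not> out (xs ! i)"
    using exists_least_iff[of "\<lambda>j. j < length xs \<and> out (xs ! j)"] by (metis order.strict_trans)
  have "0 < j" using jP xs(2) ne L before unfolding out_def by (cases j) (auto simp: hd_conv_nth)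
  have "(x1, y1, zx) \<in> bar k (box (M+L))" using x L by (auto simp: mem_bar box_def)
  then have in_box: "\<forall>v\<in>set xs. v \<in> bar k (box (M+L))"
    using open_path_stays_in[of \<omega> k _ xs] xs(1,2) ws by (simp add: Int_absorb2)
  have in_S: "xs ! i \<in> bar k S" if "i < j" for i
  proof -
    have "xs ! i \<in> bar k (box (M+L))" using in_box that jP by simp
    then show ?thesis using before[OF that] unfolding out_def S_def by (cases "xs ! i") (auto simp: mem_bar)
  qed
  have adj: "adj k (xs ! (j - 1)) (xs ! j)"
    using open_path_adj[OF xs(1) ws, of "j - 1"] jP \<open>0 < j\<close> by simp
  obtain a b c where abc: "xs ! j = (a, b, c)" by (cases "xs ! j")
  have "\<bar>a - x1\<bar> \<le> L" "\<bar>b - y1\<bar> \<le> L"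
    using before[of "j - 1"] \<open>0 < j\<close> adj_planar_coords[OF adj] abc unfolding out_def by auto
  moreover have "0 \<le> c" "c \<le> int k" using adj_along_across(4)[OF adj] abc by (auto simp: in_slab_def)
  ultimately have j_bd: "xs ! j \<in> vboundary k (bar k S)"
    using square_vboundaryI jP(2) abc unfolding S_def out_def by simp
  then have "xs ! l \<in> bar k S" if "l \<le> j" for l
    using in_S that by (cases "l = j") (auto simp: vboundary_def)
  then have "set (path_segment xs 0 j) \<subseteq> bar k S" unfolding set_path_segment[OF le0] by blast
  then have "open_path (\<omega> \<inter> slab_edges k (bar k S)) (path_segment xs 0 j)"
    by (rule open_path_restrict[OF open_path_segment[OF xs(1) le0 jP(1)] ws])
  moreover have "hd (path_segment xs 0 j) = (x1, y1, zx)" "last (path_segment xs 0 j) = xs ! j"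
    using xs(2) ne by (simp_all add: hd_path_segment last_path_segment hd_conv_nth)
  ultimately have "connects (\<omega> \<inter> slab_edges k (bar k S)) {(x1, y1, zx)} (vboundary k (bar k S))"
    unfolding connects_def using j_bd by (intro exI[of _ "path_segment xs 0 j"]) simp
  then show ?thesis unfolding S_def bar_edges_def .
qed

lemma perc_prob_exit_le_exit_prob:
  fixes M L :: int
  assumes p: "0 \<le> p" "p \<le> 1" and L: "1 \<le> L" and x: "x \<in> bar k (box M)"
  shows "perc_prob p (bar_edges k (box (M+L))) (\<lambda>\<omega>. connects \<omega> {x} (vboundary k (bar k (box (M+L)))))
     \<le> exit_prob k p (snd (snd x)) L"
proof -
  obtain x1 y1 zx where xe: "x = (x1, y1, zx)" by (cases x)
  define S where "S = {x1 - L..x1 + L} \<times> {y1 - L..y1 + L}"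
  have Ssub: "S \<subseteq> box (M+L)" using x xe unfolding S_def by (auto simp: mem_bar box_def)
  have finF: "finite (bar_edges k (box (M+L)))" by (intro finite_bar_edges finite_box)
  have "perc_prob p (bar_edges k (box (M+L))) (\<lambda>\<omega>. connects \<omega> {x} (vboundary k (bar k (box (M+L)))))
     \<le> perc_prob p (bar_edges k (box (M+L))) (\<lambda>\<omega>. connects (\<omega> \<inter> bar_edges k S) {x} (vboundary k (bar k S)))"
    by (rule perc_prob_mono[OF finF p]) (unfold xe S_def, rule connects_local_exit[OF L], use x xe in auto)
  also have "\<dots> = perc_prob p (bar_edges k S) (\<lambda>\<omega>. connects \<omega> {x} (vboundary k (bar k S)))"
    by (rule perc_prob_restrict[OF finF bar_edges_mono[OF Ssub]])
  also have "\<dots> = exit_prob k p zx L" unfolding xe S_def by (rule exit_prob_translate)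
  finally show ?thesis using xe by simp
qed

section \<open>Exponential decay\<close>

definition exit_prob_sum :: "nat \<Rightarrow> real \<Rightarrow> int \<Rightarrow> real" where
  "exit_prob_sum k p L = (\<Sum>z\<in>{0..int k}. exit_prob k p z L)"

lemma exit_prob_nonneg: "0 \<le> p \<Longrightarrow> p \<le> 1 \<Longrightarrow> 0 \<le> exit_prob k p z L"
  unfolding exit_prob_def by (rule perc_prob_nonneg)

lemma exit_prob_le_1: "0 \<le> p \<Longrightarrow> p \<le> 1 \<Longrightarrow> exit_prob k p z L \<le> 1"
  unfolding exit_prob_def by (rule perc_prob_le_1) (auto intro: finite_bar_edges finite_box)

lemma exit_prob_sum_nonneg: "0 \<le> p \<Longrightarrow> p \<le> 1 \<Longrightarrow> 0 \<le> exit_prob_sum k p L"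
  unfolding exit_prob_sum_def by (intro sum_nonneg exit_prob_nonneg)

lemma exit_prob_sum_le: "0 \<le> p \<Longrightarrow> p \<le> 1 \<Longrightarrow> exit_prob_sum k p L \<le> real (Suc k)"
proof -
  assume p: "0 \<le> p" "p \<le> 1"
  have "exit_prob_sum k p L \<le> (\<Sum>z\<in>{0..int k}. 1)" unfolding exit_prob_sum_def by (intro sum_mono exit_prob_le_1 p)
  also have "\<dots> = real (Suc k)" by simp
  finally show ?thesis .
qed

lemma exit_prob_le_sum: "0 \<le> p \<Longrightarrow> p \<le> 1 \<Longrightarrow> 0 \<le> z \<Longrightarrow> z \<le> int k \<Longrightarrow> exit_prob k p z L \<le> exit_prob_sum k p L"
  unfolding exit_prob_sum_def by (rule member_le_sum) (auto intro: exit_prob_nonneg)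

lemma exit_prob_sum_submult:
  assumes p: "0 \<le> p" "p \<le> 1" and M: "1 \<le> M" and L: "1 \<le> L"
  shows "exit_prob_sum k p (M+L) \<le> real (card (vboundary k (bar k (box M)))) * exit_prob_sum k p M * exit_prob_sum k p L"
proof -
  let ?c = "real (card (vboundary k (bar k (box M))))"
  have each: "exit_prob k p z (M+L) \<le> ?c * exit_prob k p z M * exit_prob_sum k p L" if z: "z \<in> {0..int k}" for z
  proof (rule exit_prob_simon_lieb[OF p M L])
    show "0 \<le> z" "z \<le> int k" using z by auto
    show "0 \<le> exit_prob_sum k p L" by (rule exit_prob_sum_nonneg[OF p])
    fix x assume x: "x \<in> vboundary k (bar k (box M))"
    then have xb: "x \<in> bar k (box M)" by (rule vboundary_box(1))
    have "perc_prob p (bar_edges k (box (M + L))) (\<lambda>\<omega>. connects \<omega> {x} (vboundary k (bar k (box (M + L)))))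
        \<le> exit_prob k p (snd (snd x)) L" by (rule perc_prob_exit_le_exit_prob[OF p L xb])
    also have "\<dots> \<le> exit_prob_sum k p L"
    proof -
      have "0 \<le> snd (snd x) \<and> snd (snd x) \<le> int k" using xb by (cases x) (simp add: mem_bar)
      then show ?thesis using exit_prob_le_sum[OF p] by blast
    qed
    finally show "perc_prob p (bar_edges k (box (M + L))) (\<lambda>\<omega>. connects \<omega> {x} (vboundary k (bar k (box (M + L))))) \<le> exit_prob_sum k p L" .
  qed
  have "exit_prob_sum k p (M+L) = (\<Sum>z\<in>{0..int k}. exit_prob k p z (M+L))" by (simp add: exit_prob_sum_def)
  also have "\<dots> \<le> (\<Sum>z\<in>{0..int k}. ?c * exit_prob k p z M * exit_prob_sum k p L)"
    by (rule sum_mono) (rule each)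
  also have "\<dots> = ?c * exit_prob_sum k p M * exit_prob_sum k p L"
    by (simp add: exit_prob_sum_def[of k p M] sum_distrib_left sum_distrib_right mult.assoc)
  finally show ?thesis .
qed

lemma card_vboundary_box_le:
  assumes "0 \<le> M"
  shows "real (card (vboundary k (bar k (box M)))) \<le> real (Suc k) * (2 * real_of_int M + 1)^2"
proof -
  have fin: "finite (bar k (box M))" by (intro finite_bar finite_box)
  have cv: "card (vboundary k (bar k (box M))) \<le> card (bar k (box M))"
    by (rule card_mono[OF fin]) (auto simp: vboundary_def)
  have "bar k (box M) = (\<lambda>((x, y), z). (x, y, z)) ` (box M \<times> {0..int k})"
    unfolding bar_def by force
  also have "card \<dots> \<le> card (box M \<times> {0..int k})" by (rule card_image_le) (simp add: finite_box)
  also have "\<dots> = card (box M) * Suc k"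
  proof -
    have "nat (int k + 1) = Suc k" by linarith
    then show ?thesis by (simp add: card_cartesian_product)
  qed
  also have "card (box M) = nat (2 * M + 1) * nat (2 * M + 1)"
    unfolding box_def by (simp add: card_cartesian_product)
  finally have "card (bar k (box M)) \<le> nat (2 * M + 1) * nat (2 * M + 1) * Suc k" .
  then have "card (vboundary k (bar k (box M))) \<le> nat (2 * M + 1) * nat (2 * M + 1) * Suc k"
    using cv by linarith
  then have "real (card (vboundary k (bar k (box M)))) \<le> real (nat (2 * M + 1) * nat (2 * M + 1) * Suc k)"
    by linarith
  also have "\<dots> = real (Suc k) * (2 * real_of_int M + 1)^2"
    using assms by (simp add: power2_eq_square of_nat_nat algebra_simps)
  finally show ?thesis .
qed

lemma exit_prob_sum_decay:
  assumes p: "0 \<le> p" "p \<le> 1" and M: "1 \<le> M"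
    and q: "real (card (vboundary k (bar k (box M)))) * exit_prob_sum k p M \<le> 1/2"
  shows "1 \<le> r \<Longrightarrow> exit_prob_sum k p (int t * M + r) \<le> (1/2)^t * real (Suc k)"
proof (induction t)
  case 0
  then show ?case using exit_prob_sum_le[OF p] by simp
next
  case (Suc t)
  have L: "1 \<le> int t * M + r" using Suc.prems M by (simp add: add_increasing)
  have "exit_prob_sum k p (int (Suc t) * M + r) = exit_prob_sum k p (M + (int t * M + r))" by (simp add: algebra_simps)
  also have "\<dots> \<le> real (card (vboundary k (bar k (box M)))) * exit_prob_sum k p M * exit_prob_sum k p (int t * M + r)"
    by (rule exit_prob_sum_submult[OF p M L])
  also have "\<dots> \<le> 1/2 * ((1/2)^t * real (Suc k))"
    by (rule mult_mono[OF q Suc.IH[OF Suc.prems]]) (auto intro: exit_prob_sum_nonneg[OF p])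
  finally show ?case by simp
qed

lemma exp_decay_initial_segment:
  fixes a :: "nat \<Rightarrow> real"
  assumes lt1: "\<And>m. 1 \<le> m \<Longrightarrow> m < m0 \<Longrightarrow> a m < 1"
  shows "\<exists>c>0. \<forall>m. 1 \<le> m \<and> m < m0 \<longrightarrow> a m \<le> exp (- c * real m)"
proof -
  define S where "S = insert (1/2) (a ` {1..<m0})"
  define q where "q = Max S"
  have fin: "finite S" unfolding S_def by simp
  have "q \<in> S" unfolding q_def S_def by (rule Max_in) auto
  then have q1: "q < 1" using lt1 unfolding S_def by auto
  have q0: "1/2 \<le> q" unfolding q_def S_def by (rule Max_ge) auto
  have aq: "a m \<le> q" if "1 \<le> m" "m < m0" for m
    unfolding q_def by (rule Max_ge[OF fin]) (use that in \<open>auto simp: S_def\<close>)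
  define c where "c = - ln q / real (Suc m0)"
  have "ln q < 0" using q0 q1 by simp
  then have c: "0 < c" unfolding c_def by (simp add: divide_neg_pos)
  have "a m \<le> exp (- c * real m)" if "1 \<le> m" "m < m0" for m
  proof -
    have "c * real m \<le> c * real (Suc m0)" using c that by (intro mult_left_mono) auto
    also have "\<dots> = - ln q" unfolding c_def by simp
    finally have "exp (ln q) \<le> exp (- c * real m)" by simp
    then show ?thesis using aq[OF that] q0 by simp
  qed
  then show ?thesis using c by blast
qed

lemma exp_decay_from_bound:
  fixes a :: "nat \<Rightarrow> real"
  assumes b: "0 < b" and C: "\<And>m. 1 \<le> m \<Longrightarrow> a m \<le> C * exp (- b * real m)"
    and lt1: "\<And>m. 1 \<le> m \<Longrightarrow> a m < 1"
  shows "\<exists>c>0. \<forall>m\<ge>1. a m \<le> exp (- c * real m)"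
proof -
  obtain m0 :: nat where "2 * ln (max C 1) / b < real m0" using reals_Archimedean2 by blast
  then have "ln (max C 1) \<le> b * real m0 / 2" using b by (simp add: field_simps)
  then have "exp (ln (max C 1)) \<le> exp (b * real m0 / 2)" by (simp only: exp_le_cancel_iff)
  then have m0: "C \<le> exp (b * real m0 / 2)" by (simp add: max.bounded_iff)
  have tail: "a m \<le> exp (- (b/2) * real m)" if "1 \<le> m" "m0 \<le> m" for m
  proof -
    have "b * real m0 / 2 \<le> b * real m / 2" using b that by (simp add: divide_right_mono)
    then have "C \<le> exp (b * real m / 2)" using m0 by (meson exp_le_cancel_iff order.trans)
    then have "a m \<le> exp (b * real m / 2) * exp (- b * real m)"
      using C[OF that(1)] by (meson exp_ge_zero mult_right_mono order.trans)
    also have "\<dots> = exp (- (b/2) * real m)" by (simp add: exp_add[symmetric] field_simps)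
    finally show ?thesis .
  qed
  obtain c0 where c0: "0 < c0" "\<And>m. 1 \<le> m \<Longrightarrow> m < m0 \<Longrightarrow> a m \<le> exp (- c0 * real m)"
    using exp_decay_initial_segment[of m0 a] lt1 by blast
  define c where "c = min (b/2) c0"
  have "a m \<le> exp (- c * real m)" if "1 \<le> m" for m
  proof -
    have "c * real m \<le> b/2 * real m" "c * real m \<le> c0 * real m"
      unfolding c_def by (intro mult_right_mono; simp)+
    then show ?thesis using c0(2)[OF that] tail[OF that] by (cases "m < m0") (auto intro: order.trans)
  qed
  moreover have "0 < c" unfolding c_def using b c0 by simp
  ultimately show ?thesis by blast
qed

lemma five_mult_le_power2: "5 \<le> j \<Longrightarrow> 5 * j \<le> (2::nat) ^ j"
proof (induction j rule: dec_induct)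
  case base
  then show ?case by simp
next
  case (step j)
  have "5 \<le> 5 * j" using step.hyps by simp
  then have "5 \<le> (2::nat) ^ j" using step.IH by linarith
  then show ?case using step.IH by simp
qed

lemma doubly_exponential_dominates:
  fixes n k :: nat
  assumes n: "1 \<le> n"
  shows "\<exists>j. 2 * (k+1)^2 * (2 * 3^j * n + 1)^2 \<le> 9 * 2^(2^j)"
proof -
  define A where "A = (k+1)^2 * n^2"
  define j where "j = A + 8"
  have "2 * 3^j * n + 1 \<le> 3^(Suc j) * n" using n by (simp add: Suc_le_eq)
  then have "(2 * 3^j * n + 1)^2 \<le> (3^(Suc j) * n)^2" by (rule power_mono) simp
  also have "\<dots> = 9 * 9^j * n^2"
    by (simp add: power2_eq_square power_mult_distrib[symmetric] algebra_simps)
  finally have scale: "(2 * 3^j * n + 1)^2 \<le> 9 * 9^j * n^2" .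
  have "(9::nat)^j \<le> 16^j" by (rule power_mono) auto
  then have nine: "(9::nat)^j \<le> 2^(4*j)" by (simp add: power_mult)
  have j_big: "1 + A + 4 * j \<le> 2^j" using five_mult_le_power2[of j] unfolding j_def by simp
  have "2 * (k+1)^2 * (2 * 3^j * n + 1)^2 \<le> 2 * (k+1)^2 * (9 * 9^j * n^2)"
    by (rule mult_le_mono2[OF scale])
  also have "\<dots> = 9 * (2 * A * 9^j)" unfolding A_def by (simp add: algebra_simps)
  also have "\<dots> \<le> 9 * (2 * 2^A * 2^(4*j))"
    using nine less_exp[of A] by (intro mult_le_mono2 mult_le_mono) auto
  also have "\<dots> = 9 * 2^(1 + A + 4*j)" by (simp add: power_add)
  also have "\<dots> \<le> 9 * 2^(2^j)" using j_big by (intro mult_le_mono2 power_increasing) auto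
  finally show ?thesis by blast
qed

lemma conn_prob_less_1:
  assumes p: "0 \<le> p" "p < 1" and m: "1 \<le> m"
  shows "conn_prob k p m < 1"
  unfolding conn_prob_def
proof (rule perc_prob_less_1[OF _ p])
  show "finite (slab_edges k (bar k (box m)))" by (intro finite_slab_edges finite_bar finite_box)
  show "\<not> connects {} {(0, 0, 0)} (vboundary k (bar k (box m)))"
  proof
    assume "connects {} {(0, 0, 0)} (vboundary k (bar k (box m)))"
    then obtain xs where xs: "open_path {} xs" "hd xs = (0, 0, 0)" "last xs \<in> vboundary k (bar k (box m))"
      unfolding connects_def by blast
    have ne: "xs \<noteq> []" using xs(1) open_path_def by blast
    have "\<not> Suc 0 < length xs" using open_pathD[OF xs(1), of 0] by auto
    then have "length xs = 1" using ne by (cases xs) auto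
    then have "last xs = hd xs" by (cases xs) auto
    then have "(0, 0, 0) \<in> vboundary k (bar k (box m))" using xs by simp
    then show False using vboundary_box(2)[of "(0,0,0)" k m] m by simp
  qed
qed

lemma f_easy_at_1:
  assumes N: "1 \<le> N"
  shows "f_easy k 1 N = 1"
proof -
  define T where "T = {0..N} \<times> {0..2*N}"
  define E where "E = slab_edges k (bar k T)"
  define xs where "xs = map (\<lambda>i. (int i, (0::int), (0::int))) [0..<Suc (nat N)]"
  have finE: "finite E" unfolding E_def T_def by (intro finite_slab_edges finite_bar) simp
  have op: "open_path E xs"
    unfolding open_path_def
  proof (intro conjI allI impI)
    show "xs \<noteq> []" unfolding xs_def by simp
    fix i assume i: "Suc i < length xs"
    then have iN: "int i + 1 \<le> N" unfolding xs_def by simp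
    have e: "xs ! i = (int i, 0, 0)" "xs ! Suc i = (int i + 1, 0, 0)" using i unfolding xs_def
      by (auto simp del: upt_Suc)
    have "(int i, 0, 0) \<in> bar k T" "(int i + 1, 0, 0) \<in> bar k T"
      using iN N unfolding T_def by (auto simp: mem_bar)
    moreover have "adj k (int i, 0, 0) (int i + 1, 0, 0)" unfolding adj_def in_slab_def by simp
    ultimately show "{xs ! i, xs ! Suc i} \<in> E" unfolding E_def e slab_edges_iff by simp
  qed
  have hd: "hd xs = (0, 0, 0)" unfolding xs_def by (simp del: upt_Suc add: hd_map)
  have lst: "last xs = (N, 0, 0)" unfolding xs_def using N by (simp del: upt_Suc add: last_map)
  have "connects E (bar k ({0} \<times> {0..2*N})) (bar k ({N} \<times> {0..2*N}))"
    unfolding connects_def using op hd lst N by (intro exI[of _ xs]) (auto simp: mem_bar)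
  then show ?thesis unfolding f_easy_def f_cross_def E_def[symmetric] T_def[symmetric] perc_prob_at_1[OF finE]
    using E_def T_def by simp
qed

lemma half_power_le_exp:
  fixes t :: nat and M :: real and m :: real
  assumes M: "0 < M" and tm: "m \<le> (real t + 1) * M"
  shows "(1/2::real)^t \<le> 2 * exp (- (ln 2 / M) * m)"
proof -
  have e2: "exp (real t * ln 2) = (2::real)^t" by (simp add: exp_of_nat_mult)
  have e: "(1/2::real)^t = exp (- ln 2 * real t)"
  proof -
    have "exp (- ln 2 * real t) = inverse (exp (real t * ln 2))"
      by (simp add: exp_minus[symmetric] mult.commute)
    then show ?thesis using e2 by (simp add: power_one_over inverse_eq_divide)
  qed
  have "m / M \<le> real t + 1" using tm M by (simp add: divide_le_eq)
  then have "- ln 2 * real t \<le> ln 2 - (ln 2 / M) * m"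
  proof -
    assume h: "m / M \<le> real t + 1"
    have "(ln 2 / M) * m = ln 2 * (m / M)" by simp
    also have "\<dots> \<le> ln 2 * (real t + 1)" using h by (intro mult_left_mono) auto
    finally show ?thesis by (simp add: algebra_simps)
  qed
  then have "exp (- ln 2 * real t) \<le> exp (ln 2 - (ln 2 / M) * m)" by simp
  also have "\<dots> = 2 * exp (- (ln 2 / M) * m)" by (simp add: exp_diff exp_minus divide_inverse)
  finally show ?thesis using e by simp
qed

lemma exit_prob_sum_le_f_easy:
  assumes p: "0 \<le> p" "p \<le> 1" and M: "1 \<le> M"
  shows "exit_prob_sum k p M \<le> real (Suc k) * (16 * f_easy k p M)"
proof -
  have "exit_prob_sum k p M \<le> (\<Sum>z\<in>{0..int k}. 16 * f_easy k p M)"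
    unfolding exit_prob_sum_def by (rule sum_mono) (rule exit_prob_le_f_easy[OF p M], auto)
  then show ?thesis by (simp add: add.commute)
qed

text \<open>At scale \<open>M = 3\<^sup>j n\<close> the doubly exponential smallness of \<open>f(M)\<close> beats the polynomial
  size of \<open>\<partial>B\<^sub>M\<close>.\<close>

lemma small_exit_scale:
  fixes n :: nat
  assumes p: "0 \<le> p" "p \<le> 1" and n: "1 \<le> n" and small: "144 * f_easy k p (int n) \<le> 1/2"
  shows "\<exists>M\<ge>1. real (card (vboundary k (bar k (box M)))) * exit_prob_sum k p M \<le> 1/2"
proof -
  obtain j where j: "2 * (k+1)^2 * (2 * 3^j * n + 1)^2 \<le> 9 * 2^(2^j)"
    using doubly_exponential_dominates[OF n] by blast
  define M where "M = 3^j * int n"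
  have M1: "1 \<le> M"
  proof -
    have "(1::int) * 1 \<le> 3^j * int n" using n by (intro mult_mono) auto
    then show ?thesis unfolding M_def by simp
  qed
  have it: "144 * f_easy k p M \<le> (1/2)^(2^j)" unfolding M_def
    by (rule f_easy_iterate[OF p _ small]) (use n in simp)
  have M_real: "2 * real_of_int M + 1 = real (2 * 3^j * n + 1)" unfolding M_def by simp
  let ?B = "real (Suc k) * (2 * real_of_int M + 1)^2"
  have "real (card (vboundary k (bar k (box M)))) * exit_prob_sum k p M
      \<le> ?B * (real (Suc k) * (16 * f_easy k p M))"
    by (rule mult_mono[OF card_vboundary_box_le exit_prob_sum_le_f_easy[OF p M1]])
      (use M1 exit_prob_sum_nonneg[OF p] in auto)
  also have "\<dots> = real (Suc k)^2 * (2 * real_of_int M + 1)^2 * (144 * f_easy k p M) / 9"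
    by (simp add: power2_eq_square algebra_simps)
  also have "\<dots> \<le> real (Suc k)^2 * (2 * real_of_int M + 1)^2 * (1/2)^(2^j) / 9"
    by (intro divide_right_mono mult_left_mono it) auto
  also have "\<dots> = real (2 * (k+1)^2 * (2 * 3^j * n + 1)^2) / (18 * 2^(2^j))"
    unfolding M_real by (simp add: power_one_over field_simps)
  also have "\<dots> \<le> real (9 * 2^(2^j)) / (18 * 2^(2^j))"
    using j by (intro divide_right_mono) (simp_all only: of_nat_le_iff, simp)
  also have "\<dots> = 1/2" by simp
  finally show ?thesis using M1 by blast
qed

lemma conn_prob_le_exp:
  assumes p: "0 \<le> p" "p \<le> 1" and M: "1 \<le> M"
    and small: "real (card (vboundary k (bar k (box M)))) * exit_prob_sum k p M \<le> 1/2" and m: "1 \<le> m"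
  shows "conn_prob k p (int m) \<le> 2 * real (Suc k) * exp (- (ln 2 / real_of_int M) * real m)"
proof -
  define t where "t = (m - 1) div nat M"
  define r where "r = (m - 1) mod nat M + 1"
  have r: "1 \<le> r" "r \<le> nat M" unfolding r_def using M by (simp_all add: Suc_le_eq)
  have "m = t * nat M + r" unfolding t_def r_def using m div_mult_mod_eq[of "m - 1" "nat M"] by linarith
  then have m_eq: "int m = int t * M + int r" using M by simp
  have "conn_prob k p (int m) \<le> exit_prob_sum k p (int m)"
    unfolding conn_prob_eq_exit_prob by (rule exit_prob_le_sum[OF p]) auto
  also have "\<dots> \<le> (1/2)^t * real (Suc k)"
    unfolding m_eq by (rule exit_prob_sum_decay[OF p M small]) (use r in simp)
  also have "\<dots> \<le> (2 * exp (- (ln 2 / real_of_int M) * real m)) * real (Suc k)"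
  proof (rule mult_right_mono)
    have "real m = real t * real_of_int M + real r" using m_eq by (metis of_int_of_nat_eq of_int_add of_int_mult)
    also have "\<dots> \<le> (real t + 1) * real_of_int M" using r M by (simp add: algebra_simps)
    finally show "(1/2)^t \<le> 2 * exp (- (ln 2 / real_of_int M) * real m)"
      by (intro half_power_le_exp) (use M in simp_all)
  qed simp
  finally show ?thesis by (simp add: algebra_simps)
qed

lemma conn_prob_exp_decay:
  fixes n :: nat
  assumes p: "0 \<le> p" "p \<le> 1" and n: "1 \<le> n" and f: "f_easy k p (int n) < 1/288"
  shows "\<exists>c>0. \<forall>m\<ge>1. conn_prob k p (int m) \<le> exp (- c * real m)"
proof -
  have "p \<noteq> 1" using f f_easy_at_1[of "int n" k] n by auto
  then have p1: "p < 1" using p by simp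
  have "144 * f_easy k p (int n) \<le> 1/2" using f by simp
  then obtain M where M: "1 \<le> M" "real (card (vboundary k (bar k (box M)))) * exit_prob_sum k p M \<le> 1/2"
    using small_exit_scale[OF p n] by blast
  show ?thesis
  proof (rule exp_decay_from_bound)
    show "0 < ln 2 / real_of_int M" using M by simp
    show "conn_prob k p (int m) \<le> 2 * real (Suc k) * exp (- (ln 2 / real_of_int M) * real m)" if "1 \<le> m" for m
      by (rule conn_prob_le_exp[OF p M that])
    show "conn_prob k p (int m) < 1" if "1 \<le> m" for m
      using conn_prob_less_1[OF p(1) p1] that by simp
  qed
qed

theorem mainTheorem10:
  shows "\<exists>c2 > 0. \<forall>(k::nat) \<ge> 1. \<forall>p::real. 0 \<le> p \<and> p \<le> 1 \<longrightarrow>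
     (\<exists>n::nat \<ge> 1. f_cross k p (int n) (2 * int n) < c2) \<longrightarrow>
     (\<exists>c > 0. \<forall>m::nat \<ge> 1. conn_prob k p (int m) \<le> exp (- c * real m))"
proof (rule exI[of _ "1/288"], intro conjI allI impI)
  fix k :: nat and p :: real
  assume "1 \<le> k" and p: "0 \<le> p \<and> p \<le> 1" and "\<exists>n::nat \<ge> 1. f_cross k p (int n) (2 * int n) < 1/288"
  then obtain n :: nat where n: "1 \<le> n" "f_easy k p (int n) < 1/288" by (auto simp: f_easy_def)
  show "\<exists>c > 0. \<forall>m::nat \<ge> 1. conn_prob k p (int m) \<le> exp (- c * real m)"
    using conn_prob_exp_decay[OF _ _ n] p by blast
qed simp

end
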